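(* Let $P,Q$ be lattice paths from $(0,0)$ to $(m,r)$ with $P$ never going above $Q$ and $[P,Q]$ a connected skew shape. Then the edges of the lattice path matroid polytope $\mathcal{P}(M[P,Q])$ correspond to the block-tiled bottoms with exactly $1$ block inside the region $[P,Q]$.
   Context: Lattice paths use steps $E=(1,0)$, $N=(0,1)$. $M[P,Q]$ is the matroid on $[m+r]$ whose bases are the $r$-subsets $B$ such that the lattice path with North steps exactly at positions in $B$ stays between $P$ and $Q$; $\mathcal{P}(M[P,Q])=\mathrm{conv}\{\sum_{b\in B}e_b\}\subseteq\mathbb{R}^{m+r}$. $[P,Q]$ connected means $P,Q$ meet only at $(0,0)$ and $(m,r)$. Each unit box in $[P,Q]$ with lower-left corner $(i,j)$ is labeled $i+j+1$. A block is a border strip (connected nonempty skew shape with no $2\times2$ square) of unit boxes inside $[P,Q]$, regarded as a labeled tableau; clones are blocks equal as labeled tableaux, differing only in position. An outside corner of $[P,Q]$ is a corner $NE$ on $P$ or a corner $EN$ on $Q$. For lattice paths $\lambda,\mu$ from $(0,0)$ to $(m,r)$ in $[P,Q]$ with $\lambda$ never above $\mu$ and a tiling $\tau$ of the boxes of $[\lambda,\mu]$, $[\lambda,\mu]_\tau$ is a block-tiled region if: (1) each maximal continuous intersection of $\lambda$ and $\mu$ passes through an outside corner or an end point of $[P,Q]$; (2) $\tau$ tiles all boxes of $[\lambda,\mu]$ by blocks without gaps or overlaps; (3) any two blocks of $\tau$ containing boxes with the same label are clones. A block-tiled band is a block-tiled region containing no $2\times2$ square. Block-tiled bands are in the same family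 if their sets of maximal continuous intersections and of clones constituting them are the same. A block-tiled bottom is a block-tiled band that is the lowest among the block-tiled bands in its family. *)

theory Defs
  imports "HOL-Analysis.Analysis" "HOL-Library.Function_Algebras"
begin

section \<open>Real vector structure on functions (used to model R^(m+r) as nat => real)\<close>

instantiation "fun" :: (type, real_vector) real_vector
begin
definition scaleR_fun :: "real \<Rightarrow> ('a \<Rightarrow> 'b) \<Rightarrow> 'a \<Rightarrow> 'b"
  where "scaleR_fun c f = (\<lambda>x. c *\<^sub>R f x)"
instance
  by standard (auto simp: scaleR_fun_def fun_eq_iff scaleR_add_right scaleR_add_left)
end

text \<open>A lattice path is a list of steps: True = N = (0,1), False = E = (1,0).
  Step number k (1-indexed) is the list entry at index k-1.\<close>

definition lattice_path :: "nat \<Rightarrow> nat \<Rightarrow> bool list \<Rightarrow> bool" where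
  "lattice_path m r p \<longleftrightarrow> length p = m + r \<and> length (filter id p) = r"

definition pt :: "bool list \<Rightarrow> nat \<Rightarrow> nat \<times> nat" where
  "pt p k = (length (filter Not (take k p)), length (filter id (take k p)))"

definition ht :: "bool list \<Rightarrow> nat \<Rightarrow> nat" where
  "ht p k = snd (pt p k)"

definition never_above :: "bool list \<Rightarrow> bool list \<Rightarrow> bool" where
  "never_above p q \<longleftrightarrow> (\<forall>k \<le> length p. ht p k \<le> ht q k)"

definition path_points :: "bool list \<Rightarrow> (nat \<times> nat) set" where
  "path_points p = {pt p k | k. k \<le> length p}"

definition connected_region :: "nat \<Rightarrow> nat \<Rightarrow> bool list \<Rightarrow> bool list \<Rightarrow> bool" where
  "connected_region m r P Q \<longleftrightarrow> path_points P \<inter> path_points Q = {(0,0), (m,r)}"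

definition Npos :: "bool list \<Rightarrow> nat set" where
  "Npos p = {Suc k | k. k < length p \<and> p ! k}"

definition path_of :: "nat \<Rightarrow> nat \<Rightarrow> nat set \<Rightarrow> bool list" where
  "path_of m r B = map (\<lambda>k. Suc k \<in> B) [0..<m + r]"

definition in_region :: "bool list \<Rightarrow> bool list \<Rightarrow> bool list \<Rightarrow> bool" where
  "in_region P Q l \<longleftrightarrow> length l = length P \<and> never_above P l \<and> never_above l Q"

definition lpm_bases :: "nat \<Rightarrow> nat \<Rightarrow> bool list \<Rightarrow> bool list \<Rightarrow> nat set set" where
  "lpm_bases m r P Q =
     {B. B \<subseteq> {1..m + r} \<and> card B = r \<and> in_region P Q (path_of m r B)}"

text \<open>Indicator vector e_B = sum of e_b (b in B), as an element of nat => real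
  supported on [m+r].\<close>
definition ind_vec :: "nat set \<Rightarrow> (nat \<Rightarrow> real)" where
  "ind_vec B = (\<lambda>i. if i \<in> B then 1 else 0)"

definition lpm_polytope :: "nat \<Rightarrow> nat \<Rightarrow> bool list \<Rightarrow> bool list \<Rightarrow> (nat \<Rightarrow> real) set" where
  "lpm_polytope m r P Q = convex hull (ind_vec ` lpm_bases m r P Q)"

definition edges_of :: "'a::real_vector set \<Rightarrow> 'a set set" where
  "edges_of S = {F. F face_of S \<and> (\<exists>a b. a \<noteq> b \<and> F = closed_segment a b)}"

text \<open>Unit box with lower-left corner (i,j). Height of the (i+1)-th East step of p
  (number of N steps preceding it).\<close>
definition hE :: "bool list \<Rightarrow> nat \<Rightarrow> nat" where
  "hE p i = card {k. k < length p \<and> p ! k \<and> length (filter Not (take k p)) \<le> i}"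

definition boxes :: "nat \<Rightarrow> bool list \<Rightarrow> bool list \<Rightarrow> (nat \<times> nat) set" where
  "boxes m l u = {(i, j). i < m \<and> hE l i \<le> j \<and> j < hE u i}"

definition label :: "nat \<times> nat \<Rightarrow> nat" where
  "label b = fst b + snd b + 1"

definition box_adj :: "nat \<times> nat \<Rightarrow> nat \<times> nat \<Rightarrow> bool" where
  "box_adj a b \<longleftrightarrow> (fst a = fst b \<and> (snd b = Suc (snd a) \<or> snd a = Suc (snd b)))
                   \<or> (snd a = snd b \<and> (fst b = Suc (fst a) \<or> fst a = Suc (fst b)))"

definition box_connected :: "(nat \<times> nat) set \<Rightarrow> bool" where
  "box_connected S \<longleftrightarrow>
     (\<forall>a\<in>S. \<forall>b\<in>S. (\<lambda>x y. x \<in> S \<and> y \<in> S \<and> box_adj x y)\<^sup>*\<^sup>* a b)"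

text \<open>Skew shape (in the orientation of [P,Q], where rows/columns grow to the NE):
  a set of boxes that is convex for the order (i,j) <= (i',j') iff i <= i' and j >= j',
  i.e. a difference of two order ideals; equivalently each column is an interval and the
  lower/upper ends of the columns weakly increase.\<close>
definition skew_shape :: "(nat \<times> nat) set \<Rightarrow> bool" where
  "skew_shape S \<longleftrightarrow> finite S \<and>
     (\<forall>i j i' j' a b. (i, j) \<in> S \<longrightarrow> (i', j') \<in> S \<longrightarrow> i \<le> a \<longrightarrow> a \<le> i'
         \<longrightarrow> j' \<le> b \<longrightarrow> b \<le> j \<longrightarrow> (a, b) \<in> S)"

definition has_2x2 :: "(nat \<times> nat) set \<Rightarrow> bool" where
  "has_2x2 S \<longleftrightarrow> (\<exists>i j. (i, j) \<in> S \<and> (Suc i, j) \<in> S \<and> (i, Suc j) \<in> S \<and> (Suc i, Suc j) \<in> S)"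

definition border_strip :: "(nat \<times> nat) set \<Rightarrow> bool" where
  "border_strip S \<longleftrightarrow> S \<noteq> {} \<and> skew_shape S \<and> box_connected S \<and> \<not> has_2x2 S"

definition block :: "nat \<Rightarrow> bool list \<Rightarrow> bool list \<Rightarrow> (nat \<times> nat) set \<Rightarrow> bool" where
  "block m P Q S \<longleftrightarrow> border_strip S \<and> S \<subseteq> boxes m P Q"

text \<open>Clones: equal as labelled tableaux, differing only in position; i.e. one is a
  translate of the other by a vector (d,-d) (which preserves the labels i+j+1).\<close>
definition clones :: "(nat \<times> nat) set \<Rightarrow> (nat \<times> nat) set \<Rightarrow> bool" where
  "clones S T \<longleftrightarrow> (\<exists>d::int.
      (\<forall>(i, j)\<in>S. 0 \<le> int i + d \<and> 0 \<le> int j - d) \<and>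
      T = (\<lambda>(i, j). (nat (int i + d), nat (int j - d))) ` S)"

definition outside_corners :: "bool list \<Rightarrow> bool list \<Rightarrow> (nat \<times> nat) set" where
  "outside_corners P Q =
     {pt P k | k. 0 < k \<and> k < length P \<and> P ! (k - 1) \<and> \<not> P ! k} \<union>
     {pt Q k | k. 0 < k \<and> k < length Q \<and> \<not> Q ! (k - 1) \<and> Q ! k}"

text \<open>Maximal continuous intersections of l and u: maximal intervals [a,b] of step
  counts on which the two paths are at the same point; we record each as the set of
  lattice points it consists of.\<close>
definition max_intersection_intervals :: "bool list \<Rightarrow> bool list \<Rightarrow> (nat \<times> nat) set" where
  "max_intersection_intervals l u =
     {(a, b). a \<le> b \<and> b \<le> length l \<and> (\<forall>k. a \<le> k \<and> k \<le> b \<longrightarrow> pt l k = pt u k)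
        \<and> (a = 0 \<or> pt l (a - 1) \<noteq> pt u (a - 1))
        \<and> (b = length l \<or> pt l (Suc b) \<noteq> pt u (Suc b))}"

definition max_intersections :: "bool list \<Rightarrow> bool list \<Rightarrow> (nat \<times> nat) set set" where
  "max_intersections l u = (\<lambda>(a, b). {pt l k | k. a \<le> k \<and> k \<le> b}) ` max_intersection_intervals l u"

type_synonym tiled_region = "bool list \<times> bool list \<times> (nat \<times> nat) set set"

definition block_tiled_region ::
  "nat \<Rightarrow> nat \<Rightarrow> bool list \<Rightarrow> bool list \<Rightarrow> tiled_region \<Rightarrow> bool" where
  "block_tiled_region m r P Q R \<longleftrightarrow> (case R of (l, u, \<tau>) \<Rightarrow>
     lattice_path m r l \<and> lattice_path m r u \<and> in_region P Q l \<and> in_region P Q u \<and>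
     never_above l u \<and>
     \<comment> \<open>(1)\<close>
     (\<forall>I \<in> max_intersections l u. I \<inter> (outside_corners P Q \<union> {(0,0), (m,r)}) \<noteq> {}) \<and>
     \<comment> \<open>(2)\<close>
     (\<forall>S\<in>\<tau>. block m P Q S) \<and>
     (\<forall>S\<in>\<tau>. \<forall>T\<in>\<tau>. S \<noteq> T \<longrightarrow> S \<inter> T = {}) \<and>
     \<Union>\<tau> = boxes m l u \<and>
     \<comment> \<open>(3)\<close>
     (\<forall>S\<in>\<tau>. \<forall>T\<in>\<tau>. (\<exists>x\<in>S. \<exists>y\<in>T. label x = label y) \<longrightarrow> clones S T))"

definition block_tiled_band ::
  "nat \<Rightarrow> nat \<Rightarrow> bool list \<Rightarrow> bool list \<Rightarrow> tiled_region \<Rightarrow> bool" where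
  "block_tiled_band m r P Q R \<longleftrightarrow>
     block_tiled_region m r P Q R \<and> \<not> has_2x2 (boxes m (fst R) (fst (snd R)))"

text \<open>Same family: same set of maximal continuous intersections and the same clones
  constituting them (a bijection between the tilings matching clones).\<close>
definition same_family :: "tiled_region \<Rightarrow> tiled_region \<Rightarrow> bool" where
  "same_family R1 R2 \<longleftrightarrow> (case R1 of (l1, u1, \<tau>1) \<Rightarrow> case R2 of (l2, u2, \<tau>2) \<Rightarrow>
     max_intersections l1 u1 = max_intersections l2 u2 \<and>
     (\<exists>g. bij_betw g \<tau>1 \<tau>2 \<and> (\<forall>S\<in>\<tau>1. clones S (g S))))"

definition block_tiled_bottom ::
  "nat \<Rightarrow> nat \<Rightarrow> bool list \<Rightarrow> bool list \<Rightarrow> tiled_region \<Rightarrow> bool" where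
  "block_tiled_bottom m r P Q R \<longleftrightarrow> block_tiled_band m r P Q R \<and>
     (\<forall>R'. block_tiled_band m r P Q R' \<and> same_family R R' \<longrightarrow>
        never_above (fst R) (fst R') \<and> never_above (fst (snd R)) (fst (snd R')))"

end

theory Submission
  imports Defs
begin

text \<open>A band between paths \<open>l \<le> u\<close> consisting of a single border strip is the same as a path \<open>u\<close>
  obtained from \<open>l\<close> by moving one North step from some position \<open>b\<close> to an earlier position \<open>a\<close>:
  thinness forbids a height difference of two, connectedness forces the positions where \<open>u\<close> is
  strictly higher to form an interval.  Such a band is alone in its family, since the maximal
  intersections fix both paths outside \<open>[a, b)\<close> and thereby the position of the clone, so it is a
  bottom; and its North-step sets are two bases of \<open>M[P, Q]\<close> differing by a single exchange.

  On the polytope side, if bases \<open>B\<close>, \<open>B'\<close> differ by one exchange, the linear functional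
  \<open>z \<mapsto> \<Sum>i\<in>B. z i + \<Sum>i\<in>B'. z i\<close> attains its maximum over the vertices exactly at \<open>e\<^sub>B\<close> and
  \<open>e\<^sub>B\<^sub>'\<close>, so they span an edge.  Conversely, if \<open>B\<close> and \<open>B'\<close> differ in more places, the
  exchange at their first difference yields bases \<open>C \<noteq> B, B'\<close> and \<open>C'\<close> with
  \<open>e\<^sub>C + e\<^sub>C\<^sub>' = e\<^sub>B + e\<^sub>B\<^sub>'\<close>, so \<open>[e\<^sub>B, e\<^sub>B\<^sub>']\<close> is not a face.  Orienting each exchange pair by which
  path is higher gives the bijection.\<close>

section \<open>Lattice paths as height functions\<close>

definition wd :: "bool list \<Rightarrow> nat \<Rightarrow> nat" where
  "wd p k = length (filter Not (take k p))"

lemma ht_conv_filter: "ht p k = length (filter id (take k p))"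
  by (simp add: ht_def pt_def)

lemma pt_conv: "pt p k = (wd p k, ht p k)"
  by (simp add: pt_def wd_def ht_conv_filter)

lemma ht_0 [simp]: "ht p 0 = 0"
  by (simp add: ht_conv_filter)

lemma ht_Suc: "k < length p \<Longrightarrow> ht p (Suc k) = ht p k + (if p ! k then 1 else 0)"
  by (simp add: ht_conv_filter take_Suc_conv_app_nth)

lemma ht_Suc_le: "ht p (Suc k) \<le> Suc (ht p k)"
proof (cases "k < length p")
  case True
  then show ?thesis by (simp add: ht_Suc)
next
  case False
  then show ?thesis by (simp add: ht_conv_filter)
qed

lemma ht_le_self: "ht p k \<le> k"
  unfolding ht_conv_filter by (metis length_filter_le length_take min.bounded_iff)

lemma ht_mono: "k \<le> k' \<Longrightarrow> ht p k \<le> ht p k'"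
proof -
  assume "k \<le> k'"
  then have "take k p = take k (take k' p)"
    by (simp add: min_def)
  moreover have "length (filter id (take k (take k' p))) \<le> length (filter id (take k' p))"
    by (metis append_take_drop_id filter_append le_add1 length_append)
  ultimately show ?thesis
    by (simp add: ht_conv_filter)
qed

lemma wd_mono: "k \<le> k' \<Longrightarrow> wd p k \<le> wd p k'"
proof -
  assume "k \<le> k'"
  then have "take k p = take k (take k' p)"
    by (simp add: min_def)
  moreover have "length (filter Not (take k (take k' p))) \<le> length (filter Not (take k' p))"
    by (metis append_take_drop_id filter_append le_add1 length_append)
  ultimately show ?thesis
    by (simp add: wd_def)
qed

lemma wd_plus_ht: "k \<le> length p \<Longrightarrow> wd p k + ht p k = k"
  using sum_length_filter_compl[of id "take k p"] by (simp add: wd_def ht_conv_filter comp_def)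

lemma pt_conv_ht: "k \<le> length p \<Longrightarrow> pt p k = (k - ht p k, ht p k)"
  using wd_plus_ht[of k p] by (simp add: pt_conv)

lemma pt_eq_iff_ht_eq:
  "k \<le> length l \<Longrightarrow> k \<le> length u \<Longrightarrow> pt l k = pt u k \<longleftrightarrow> ht l k = ht u k"
  using pt_conv_ht[of k l] pt_conv_ht[of k u] by auto

lemma ht_card: "ht p K = card {k. k < K \<and> k < length p \<and> p ! k}"
proof -
  have "{k. k < length (take K p) \<and> take K p ! k} = {k. k < K \<and> k < length p \<and> p ! k}"
    by auto
  then show ?thesis
    by (simp add: ht_conv_filter length_filter_conv_card)
qed

lemma lattice_path_length: "lattice_path m r p \<Longrightarrow> length p = m + r"
  by (simp add: lattice_path_def)

lemma lattice_path_ht_end: "lattice_path m r p \<Longrightarrow> m + r \<le> k \<Longrightarrow> ht p k = r"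
  by (simp add: lattice_path_def ht_conv_filter)

lemma lattice_path_wd_le: "lattice_path m r p \<Longrightarrow> wd p k \<le> m"
proof -
  assume p: "lattice_path m r p"
  have "wd p k \<le> wd p (m + r)"
    using wd_mono[of k "m + r" p] p by (cases "k \<le> m + r") (simp_all add: wd_def lattice_path_length)
  also have "\<dots> = m"
    using wd_plus_ht[of "m + r" p] p by (simp add: lattice_path_length lattice_path_ht_end)
  finally show ?thesis .
qed

lemma lattice_path_ht_eq_beyond:
  "lattice_path m r l \<Longrightarrow> lattice_path m r u \<Longrightarrow> m + r \<le> k \<Longrightarrow> ht l k = ht u k"
  by (simp add: lattice_path_ht_end)

lemma lattice_path_pt_end: "lattice_path m r p \<Longrightarrow> pt p (m + r) = (m, r)"
  using pt_conv_ht[of "m + r" p] by (simp add: lattice_path_length lattice_path_ht_end)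

lemma never_above_ht:
  assumes "lattice_path m r l" "lattice_path m r u" "never_above l u"
  shows "ht l k \<le> ht u k"
proof (cases "k \<le> m + r")
  case True
  then show ?thesis
    using assms by (simp add: never_above_def lattice_path_length)
next
  case False
  then show ?thesis
    using lattice_path_ht_eq_beyond[OF assms(1,2)] by simp
qed

lemma Npos_subset: "Npos p \<subseteq> {1..length p}"
  by (auto simp: Npos_def)

lemma Suc_in_Npos_iff: "Suc j \<in> Npos p \<longleftrightarrow> j < length p \<and> p ! j"
  by (auto simp: Npos_def)

lemma card_Npos: "card (Npos p) = length (filter id p)"
proof -
  have "Npos p = Suc ` {k. k < length p \<and> p ! k}"
    by (auto simp: Npos_def)
  then show ?thesis
    by (simp add: card_image length_filter_conv_card)
qed

lemma length_path_of [simp]: "length (path_of m r B) = m + r"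
  by (simp add: path_of_def)

lemma path_of_Npos: "length p = m + r \<Longrightarrow> path_of m r (Npos p) = p"
  by (rule nth_equalityI) (auto simp: path_of_def Npos_def)

lemma Npos_path_of:
  assumes "B \<subseteq> {1..m + r}"
  shows "Npos (path_of m r B) = B"
proof
  show "Npos (path_of m r B) \<subseteq> B"
    by (auto simp: Npos_def path_of_def)
  show "B \<subseteq> Npos (path_of m r B)"
  proof
    fix z assume z: "z \<in> B"
    then have "1 \<le> z" "z \<le> m + r"
      using assms by auto
    then show "z \<in> Npos (path_of m r B)"
      using z unfolding Npos_def path_of_def
      by (auto intro!: exI[of _ "z - 1"])
  qed
qed

lemma Npos_inj_lattice_path:
  "lattice_path m r p \<Longrightarrow> lattice_path m r q \<Longrightarrow> Npos p = Npos q \<Longrightarrow> p = q"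
  by (metis lattice_path_length path_of_Npos)

section \<open>Boxes of a region in terms of heights\<close>

lemma ht_le_hE:
  assumes "k \<le> length p" "wd p k \<le> i"
  shows "ht p k \<le> hE p i"
proof -
  have "{k'. k' < k \<and> k' < length p \<and> p ! k'} \<subseteq> {k'. k' < length p \<and> p ! k' \<and> wd p k' \<le> i}"
  proof (intro subsetI CollectI conjI)
    fix k' assume "k' \<in> {k'. k' < k \<and> k' < length p \<and> p ! k'}"
    then show "k' < length p" "p ! k'" "wd p k' \<le> i"
      using wd_mono[of k' k p] assms(2) by auto
  qed
  then show ?thesis
    unfolding ht_card hE_def wd_def[symmetric] by (rule card_mono[rotated]) simp
qed

lemma hE_le_ht:
  assumes "k \<le> length p" "i < wd p k"
  shows "hE p i \<le> ht p k"
proof -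
  have "{k'. k' < length p \<and> p ! k' \<and> wd p k' \<le> i} \<subseteq> {k'. k' < k \<and> k' < length p \<and> p ! k'}"
  proof (intro subsetI CollectI conjI)
    fix k' assume k': "k' \<in> {k'. k' < length p \<and> p ! k' \<and> wd p k' \<le> i}"
    show "k' < k"
    proof (rule ccontr)
      assume "\<not> k' < k"
      then show False
        using k' assms(2) wd_mono[of k k' p] by simp
    qed
  qed auto
  then show ?thesis
    unfolding ht_card hE_def wd_def[symmetric] by (rule card_mono[rotated]) simp
qed

text \<open>\<open>hE p i \<le> j\<close> says that the box \<open>(i, j)\<close> lies above \<open>p\<close>.\<close>

lemma hE_le_iff:
  assumes p: "lattice_path m r p" and "i < m"
  shows "hE p i \<le> j \<longleftrightarrow> ht p (i + j + 1) \<le> j"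
proof (cases "i + j + 1 \<le> length p")
  case True
  then have "wd p (i + j + 1) + ht p (i + j + 1) = i + j + 1"
    by (rule wd_plus_ht)
  then show ?thesis
    using ht_le_hE[OF True, of i] hE_le_ht[OF True, of i] by linarith
next
  case False
  have "hE p i \<le> ht p (length p)"
    using hE_le_ht[of "length p" p i] \<open>i < m\<close> wd_plus_ht[of "length p" p] p
    by (simp add: lattice_path_length lattice_path_ht_end)
  then show ?thesis
    using False p \<open>i < m\<close> by (simp add: lattice_path_length lattice_path_ht_end)
qed

lemma mem_boxes_iff:
  assumes "lattice_path m r l" "lattice_path m r u"
  shows "x \<in> boxes m l u \<longleftrightarrow> fst x < m \<and> ht l (label x) \<le> snd x \<and> snd x < ht u (label x)"
  using hE_le_iff[OF assms(1), of "fst x" "snd x"] hE_le_iff[OF assms(2), of "fst x" "snd x"]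
  by (cases x) (auto simp: boxes_def label_def not_le)

lemma ht_less_at_label:
  assumes "lattice_path m r l" "lattice_path m r u" "x \<in> boxes m l u"
  shows "ht l (label x) < ht u (label x)"
  using assms mem_boxes_iff by fastforce

text \<open>The box with label \<open>k\<close> directly below the path \<open>u\<close>.\<close>

definition top_box :: "bool list \<Rightarrow> nat \<Rightarrow> nat \<times> nat" where
  "top_box u k = (k - ht u k, ht u k - 1)"

lemma top_box_in_boxes:
  assumes l: "lattice_path m r l" and u: "lattice_path m r u" and k: "ht l k < ht u k"
  shows "top_box u k \<in> boxes m l u"
proof -
  have "k \<le> m + r"
    using k lattice_path_ht_eq_beyond[OF l u] by (metis less_irrefl nat_le_linear)
  then have "k - ht u k < m"
    using k wd_plus_ht[of k l] lattice_path_wd_le[OF l, of k] ht_le_self[of u k]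
    by (simp add: lattice_path_length[OF l])
  moreover have "k - ht u k + (ht u k - 1) + 1 = k"
    using k ht_le_self[of u k] by simp
  ultimately show ?thesis
    using k by (simp add: mem_boxes_iff[OF l u] label_def top_box_def)
qed

lemma label_top_box: "0 < ht u k \<Longrightarrow> label (top_box u k) = k"
  using ht_le_self[of u k] by (simp add: label_def top_box_def)

lemma box_eq_top_box:
  assumes l: "lattice_path m r l" and u: "lattice_path m r u"
    and x: "x \<in> boxes m l u" and thin: "ht u (label x) \<le> Suc (ht l (label x))"
  shows "x = top_box u (label x)"
proof -
  have "snd x = ht u (label x) - 1"
    using x thin mem_boxes_iff[OF l u, of x] by arith
  then show ?thesis
    using ht_less_at_label[OF l u x] by (cases x) (simp add: label_def top_box_def; arith)
qed

lemma has_2x2_boxes_iff: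
  assumes l: "lattice_path m r l" and u: "lattice_path m r u"
  shows "has_2x2 (boxes m l u) \<longleftrightarrow> (\<exists>k. ht l k + 2 \<le> ht u k)"
proof
  assume "has_2x2 (boxes m l u)"
  then obtain i j where "(Suc i, j) \<in> boxes m l u" "(i, Suc j) \<in> boxes m l u"
    unfolding has_2x2_def by blast
  then have "ht l (i + j + 2) \<le> j" "Suc j < ht u (i + j + 2)"
    by (auto simp: mem_boxes_iff[OF l u] label_def)
  then show "\<exists>k. ht l k + 2 \<le> ht u k"
    by (intro exI[of _ "i + j + 2"]) simp
next
  assume "\<exists>k. ht l k + 2 \<le> ht u k"
  then obtain c where c: "ht l c + 2 \<le> ht u c" ..
  have "c \<le> m + r"
  proof (rule ccontr)
    assume "\<not> c \<le> m + r"
    then show False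
      using c lattice_path_ht_eq_beyond[OF l u, of c] by simp
  qed
  then have wd: "wd l c + ht l c = c" "wd l c \<le> m"
    using wd_plus_ht[of c l] lattice_path_wd_le[OF l] by (simp_all add: lattice_path_length[OF l])
  define i where "i = c - ht u c"
  define j where "j = ht u c - 2"
  have hc: "ht u c \<le> c" "Suc (c - 1) = c"
    using c ht_le_self[of u c] by auto
  have "Suc i < m"
    using wd c hc by (simp add: i_def)
  moreover have "ht l (c - 1) \<le> ht l c" "ht u c \<le> Suc (ht u (c - 1))"
    using ht_mono[of "c - 1" c l] ht_Suc_le[of u "c - 1"] hc by auto
  moreover have "ht l (Suc c) \<le> Suc (ht l c)" "ht u c \<le> ht u (Suc c)"
    using ht_Suc_le[of l c] ht_mono[of c "Suc c" u] by auto
  moreover have "i + j + 1 = c - 1" "Suc i + j + 1 = c" "i + Suc j + 1 = c" "Suc i + Suc j + 1 = Suc c"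
    using c hc by (auto simp: i_def j_def)
  ultimately have "(i, j) \<in> boxes m l u" "(Suc i, j) \<in> boxes m l u"
    "(i, Suc j) \<in> boxes m l u" "(Suc i, Suc j) \<in> boxes m l u"
    using c by (auto simp: mem_boxes_iff[OF l u] label_def j_def)
  then show "has_2x2 (boxes m l u)"
    unfolding has_2x2_def by blast
qed

lemma label_box_adj: "box_adj a b \<Longrightarrow> label b = Suc (label a) \<or> label a = Suc (label b)"
  by (auto simp: box_adj_def label_def)

text \<open>Labels change by one along adjacent boxes, so a label \<open>k\<close> with no box separates the region.\<close>

lemma not_box_connected_if_pinched:
  assumes l: "lattice_path m r l" and u: "lattice_path m r u" and k: "ht u k \<le> ht l k"
    and x: "x \<in> boxes m l u" "label x < k" and y: "y \<in> boxes m l u" "k < label y"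
  shows "\<not> box_connected (boxes m l u)"
proof
  assume "box_connected (boxes m l u)"
  then have "(\<lambda>a b. a \<in> boxes m l u \<and> b \<in> boxes m l u \<and> box_adj a b)\<^sup>*\<^sup>* x y"
    using x y unfolding box_connected_def by blast
  then have "label y < k"
  proof (induction rule: rtranclp_induct)
    case base
    then show ?case using x by simp
  next
    case (step a b)
    have "label b \<noteq> k"
      using ht_less_at_label[OF l u, of b] step k by auto
    then show ?case
      using label_box_adj[of a b] step by auto
  qed
  then show False
    using y by simp
qed

lemma hE_mono: "i \<le> i' \<Longrightarrow> hE p i \<le> hE p i'"
  unfolding hE_def by (rule card_mono) auto

lemma skew_shape_boxes: "skew_shape (boxes m l u)"
proof -
  have "boxes m l u \<subseteq> {..<m} \<times> {..<hE u m}"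
  proof
    fix x assume "x \<in> boxes m l u"
    then show "x \<in> {..<m} \<times> {..<hE u m}"
      using hE_mono[of "fst x" m u] by (auto simp: boxes_def)
  qed
  then have "finite (boxes m l u)"
    by (rule finite_subset) simp
  moreover have "(a, b) \<in> boxes m l u"
    if "(i, j) \<in> boxes m l u" "(i', j') \<in> boxes m l u" "i \<le> a" "a \<le> i'" "j' \<le> b" "b \<le> j"
    for i j i' j' a b
    using that hE_mono[of a i' l] hE_mono[of i a u] by (auto simp: boxes_def)
  ultimately show ?thesis
    unfolding skew_shape_def by blast
qed

lemma boxes_mono:
  assumes P: "lattice_path m r P" and Q: "lattice_path m r Q"
    and l: "lattice_path m r l" and u: "lattice_path m r u"
    and "\<And>k. ht P k \<le> ht l k" "\<And>k. ht u k \<le> ht Q k"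
  shows "boxes m l u \<subseteq> boxes m P Q"
  using assms mem_boxes_iff[OF l u] mem_boxes_iff[OF P Q] by (meson le_trans less_le_trans subsetI)

section \<open>Bands consisting of a single border strip\<close>

text \<open>The upper path is the lower one with the North step at position \<open>b\<close> moved forward to
  position \<open>a\<close>; the region between them is then the thin strip of the boxes with labels in
  \<open>[a, b)\<close>.\<close>

definition raised_between :: "nat \<Rightarrow> nat \<Rightarrow> bool list \<Rightarrow> bool list \<Rightarrow> bool" where
  "raised_between a b l u \<longleftrightarrow> (\<forall>k. ht u k = ht l k + (if a \<le> k \<and> k < b then 1 else 0))"

lemma raised_between_ht:
  "raised_between a b l u \<Longrightarrow> ht u k = (if a \<le> k \<and> k < b then Suc (ht l k) else ht l k)"
  by (simp add: raised_between_def)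

lemma never_above_if_raised_between: "raised_between a b l u \<Longrightarrow> never_above l u"
  by (simp add: never_above_def raised_between_ht)

lemma raised_between_bounds:
  assumes l: "lattice_path m r l" and u: "lattice_path m r u"
    and s: "raised_between a b l u" and "a < b"
  shows "1 \<le> a" "b \<le> m + r"
proof -
  show "1 \<le> a"
    using raised_between_ht[OF s, of 0] \<open>a < b\<close> by (cases a) auto
  show "b \<le> m + r"
  proof (rule ccontr)
    assume "\<not> b \<le> m + r"
    then show False
      using raised_between_ht[OF s, of "max a (m + r)"] \<open>a < b\<close>
        lattice_path_ht_eq_beyond[OF l u, of "max a (m + r)"] by simp
  qed
qed

lemma ht_less_between_if_box_connected:
  assumes l: "lattice_path m r l" and u: "lattice_path m r u"
    and connected: "box_connected (boxes m l u)"
    and "ht l i < ht u i" "ht l k < ht u k" "i \<le> j" "j \<le> k"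
  shows "ht l j < ht u j"
proof (rule ccontr)
  assume pinched: "\<not> ht l j < ht u j"
  then have "i < j" "j < k"
    using assms(4-7) by (auto simp: le_less)
  moreover have "top_box u i \<in> boxes m l u" "top_box u k \<in> boxes m l u"
    using top_box_in_boxes[OF l u] assms(4,5) by simp_all
  moreover have "label (top_box u i) = i" "label (top_box u k) = k"
    using assms(4,5) by (simp_all add: label_top_box)
  ultimately show False
    using not_box_connected_if_pinched[OF l u, of j "top_box u i" "top_box u k"] pinched connected
    by (simp add: not_less)
qed

lemma raised_between_if_border_strip:
  assumes l: "lattice_path m r l" and u: "lattice_path m r u" and "never_above l u"
    and strip: "border_strip (boxes m l u)"
  shows "\<exists>a b. a < b \<and> raised_between a b l u"
proof -
  define D where "D = {k. ht l k < ht u k}"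
  have thin: "ht u k < ht l k + 2" for k
    using strip by (auto simp: border_strip_def has_2x2_boxes_iff[OF l u] not_le)
  have val: "ht u k = ht l k + (if k \<in> D then 1 else 0)" for k
    using thin[of k] never_above_ht[OF l u \<open>never_above l u\<close>, of k]
    by (cases "k \<in> D") (simp_all add: D_def)
  obtain x where "x \<in> boxes m l u"
    using strip by (auto simp: border_strip_def)
  then have "label x \<in> D"
    using ht_less_at_label[OF l u] by (simp add: D_def)
  define a where "a = (LEAST k. k \<in> D)"
  have aD: "a \<in> D" and amin: "\<And>k. k < a \<Longrightarrow> k \<notin> D"
    using \<open>label x \<in> D\<close> not_less_Least unfolding a_def by (auto intro: LeastI)
  have "k \<notin> D" if "m + r \<le> k" for k
    using lattice_path_ht_eq_beyond[OF l u that] by (simp add: D_def)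
  then have ex: "a < m + r \<and> m + r \<notin> D"
    using aD by (meson not_le order_refl)
  define b where "b = (LEAST k. a < k \<and> k \<notin> D)"
  have bD: "a < b" "b \<notin> D" and bmin: "\<And>k. a < k \<Longrightarrow> k < b \<Longrightarrow> k \<in> D"
    using LeastI[of "\<lambda>k. a < k \<and> k \<notin> D", OF ex] not_less_Least unfolding b_def by auto
  have "k < b" if "k \<in> D" for k
  proof (rule ccontr)
    assume "\<not> k < b"
    moreover have "box_connected (boxes m l u)"
      using strip by (simp add: border_strip_def)
    ultimately have "ht l b < ht u b"
      using ht_less_between_if_box_connected[OF l u, of a k b] aD that \<open>a < b\<close> by (simp add: D_def)
    then show False
      using bD(2) by (simp add: D_def)
  qed
  then have "k \<in> D \<longleftrightarrow> a \<le> k \<and> k < b" for k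
    using aD amin bmin by (metis le_eq_less_or_eq not_le)
  then have "raised_between a b l u"
    unfolding raised_between_def using val by simp
  then show ?thesis
    using bD by blast
qed

lemma raised_between_steps:
  assumes l: "lattice_path m r l" and u: "lattice_path m r u"
    and s: "raised_between a b l u" and "a < b" and j: "j < m + r"
  shows "Suc j = a \<Longrightarrow> u ! j \<and> \<not> l ! j"
    and "Suc j = b \<Longrightarrow> l ! j \<and> \<not> u ! j"
    and "Suc j \<noteq> a \<Longrightarrow> Suc j \<noteq> b \<Longrightarrow> u ! j = l ! j"
proof -
  have "ht u (Suc j) = ht u j + (if u ! j then 1 else 0)"
    "ht l (Suc j) = ht l j + (if l ! j then 1 else 0)"
    using ht_Suc j lattice_path_length[OF l] lattice_path_length[OF u] by simp_all
  then have "(if u ! j then 1 else 0) + (if a \<le> j \<and> j < b then 1 else 0)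
      = (if l ! j then 1 else 0) + (if a \<le> Suc j \<and> Suc j < b then 1 else (0::nat))"
    using raised_between_ht[OF s, of j] raised_between_ht[OF s, of "Suc j"]
    by (simp split: if_splits)
  then show "Suc j = a \<Longrightarrow> u ! j \<and> \<not> l ! j" "Suc j = b \<Longrightarrow> l ! j \<and> \<not> u ! j"
    "Suc j \<noteq> a \<Longrightarrow> Suc j \<noteq> b \<Longrightarrow> u ! j = l ! j"
    using \<open>a < b\<close> by (auto simp: le_Suc_eq split: if_splits)
qed

lemma raised_between_imp_Npos_diff:
  assumes l: "lattice_path m r l" and u: "lattice_path m r u"
    and s: "raised_between a b l u" and ab: "a < b"
  shows "Npos u - Npos l = {a}" "Npos l - Npos u = {b}"
proof -
  note steps = raised_between_steps[OF l u s ab]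
  note bounds = raised_between_bounds[OF l u s ab]
  have len: "length l = m + r" "length u = m + r"
    using l u by (simp_all add: lattice_path_length)
  have Npos_diff: "z \<in> Npos p - Npos q \<longleftrightarrow> (\<exists>j. z = Suc j \<and> j < m + r \<and> p ! j \<and> \<not> q ! j)"
    if "length p = m + r" "length q = m + r" for p q z
    using that by (cases z) (auto simp: Suc_in_Npos_iff Npos_def)
  have "a = Suc (a - 1)" "b = Suc (b - 1)" "a - 1 < m + r" "b - 1 < m + r"
    using bounds ab by auto
  moreover have "Suc j = a" if "j < m + r" "u ! j" "\<not> l ! j" for j
    using steps that by blast
  moreover have "Suc j = b" if "j < m + r" "l ! j" "\<not> u ! j" for j
    using steps that by blast
  ultimately show "Npos u - Npos l = {a}" "Npos l - Npos u = {b}"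
    unfolding set_eq_iff Npos_diff[OF len(2,1)] Npos_diff[OF len] singleton_iff
    using steps by metis+
qed

lemma raised_between_if_steps:
  assumes l: "lattice_path m r l" and u: "lattice_path m r u" and "1 \<le> a" "a < b" "b \<le> m + r"
    and step_a: "u ! (a - 1) \<and> \<not> l ! (a - 1)" and step_b: "l ! (b - 1) \<and> \<not> u ! (b - 1)"
    and steps: "\<And>j. j < m + r \<Longrightarrow> Suc j \<noteq> a \<Longrightarrow> Suc j \<noteq> b \<Longrightarrow> u ! j = l ! j"
  shows "raised_between a b l u"
proof -
  have within: "ht u k = ht l k + (if a \<le> k \<and> k < b then 1 else 0)" if "k \<le> m + r" for k
    using that
  proof (induction k)
    case 0
    then show ?case using \<open>1 \<le> a\<close> by simp
  next
    case (Suc k)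
    have su: "ht u (Suc k) = ht u k + (if u ! k then 1 else 0)"
      and sl: "ht l (Suc k) = ht l k + (if l ! k then 1 else 0)"
      using Suc.prems ht_Suc l u by (simp_all add: lattice_path_length)
    have IH: "ht u k = ht l k + (if a \<le> k \<and> k < b then 1 else 0)"
      using Suc by simp
    consider "Suc k = a" | "Suc k = b" | "Suc k \<noteq> a" "Suc k \<noteq> b"
      by blast
    then show ?case
    proof cases
      case 1
      then show ?thesis using su sl IH step_a \<open>a < b\<close> by auto
    next
      case 2
      then show ?thesis using su sl IH step_b \<open>a < b\<close> by auto
    next
      case 3
      then show ?thesis using su sl IH steps[of k] Suc.prems by (auto simp: le_Suc_eq)
    qed
  qed
  show ?thesis
    unfolding raised_between_def
  proof
    fix k
    show "ht u k = ht l k + (if a \<le> k \<and> k < b then 1 else 0)"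
    proof (cases "k \<le> m + r")
      case True
      then show ?thesis by (rule within)
    next
      case False
      then show ?thesis
        using lattice_path_ht_eq_beyond[OF u l, of k] \<open>b \<le> m + r\<close> by simp
    qed
  qed
qed

lemma Npos_diff_imp_raised_between:
  assumes l: "lattice_path m r l" and u: "lattice_path m r u"
    and a: "Npos u - Npos l = {a}" and b: "Npos l - Npos u = {b}" and "a < b"
  shows "raised_between a b l u"
proof -
  have len: "length l = m + r" "length u = m + r"
    using l u by (simp_all add: lattice_path_length)
  have bounds: "1 \<le> a" "b \<le> m + r"
    using a b Npos_subset[of u] Npos_subset[of l] len by auto
  have "Suc (a - 1) \<in> Npos u - Npos l" "Suc (b - 1) \<in> Npos l - Npos u"
    using a b bounds \<open>a < b\<close> by simp_all
  then have "u ! (a - 1) \<and> \<not> l ! (a - 1)" "l ! (b - 1) \<and> \<not> u ! (b - 1)"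
    unfolding Diff_iff Suc_in_Npos_iff using len by simp_all
  moreover have "u ! j = l ! j" if "j < m + r" "Suc j \<noteq> a" "Suc j \<noteq> b" for j
    using that a b len by (auto simp: Npos_def set_eq_iff)
  ultimately show ?thesis
    using raised_between_if_steps[OF l u bounds(1) \<open>a < b\<close> bounds(2)] by blast
qed

lemma raised_between_iff_Npos_diff:
  assumes "lattice_path m r l" "lattice_path m r u" "a < b"
  shows "raised_between a b l u \<longleftrightarrow> Npos u - Npos l = {a} \<and> Npos l - Npos u = {b}"
  using assms raised_between_imp_Npos_diff Npos_diff_imp_raised_between by metis

lemma boxes_eq_top_boxes_if_raised_between:
  assumes l: "lattice_path m r l" and u: "lattice_path m r u" and s: "raised_between a b l u"
  shows "boxes m l u = top_box u ` {a..<b}"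
proof (intro equalityI subsetI)
  fix x assume x: "x \<in> boxes m l u"
  then have "ht l (label x) < ht u (label x)"
    by (rule ht_less_at_label[OF l u])
  then have "label x \<in> {a..<b}" "ht u (label x) \<le> Suc (ht l (label x))"
    using raised_between_ht[OF s, of "label x"] by (auto split: if_splits)
  then show "x \<in> top_box u ` {a..<b}"
    using box_eq_top_box[OF l u x] by blast
next
  fix x assume "x \<in> top_box u ` {a..<b}"
  then show "x \<in> boxes m l u"
    using top_box_in_boxes[OF l u] raised_between_ht[OF s] by auto
qed

lemma top_box_adj:
  assumes "k < length u" "0 < ht u k"
  shows "box_adj (top_box u k) (top_box u (Suc k))"
  using assms ht_le_self[of u k] by (auto simp: top_box_def box_adj_def ht_Suc Suc_diff_le)

lemma box_connected_if_raised_between: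
  assumes l: "lattice_path m r l" and u: "lattice_path m r u"
    and s: "raised_between a b l u" and "a < b"
  shows "box_connected (boxes m l u)"
proof -
  define S where "S = boxes m l u"
  define R where "R x y \<longleftrightarrow> x \<in> S \<and> y \<in> S \<and> box_adj x y" for x y
  have S: "S = top_box u ` {a..<b}"
    unfolding S_def by (rule boxes_eq_top_boxes_if_raised_between[OF l u s])
  have "b \<le> length u"
    using raised_between_bounds[OF l u s \<open>a < b\<close>] by (simp add: lattice_path_length[OF u])
  then have adj: "R (top_box u k) (top_box u (Suc k))" "R (top_box u (Suc k)) (top_box u k)"
    if "a \<le> k" "Suc k < b" for k
    using that top_box_adj[of k u] raised_between_ht[OF s, of k]
    by (auto simp: R_def S box_adj_def)
  have "R\<^sup>*\<^sup>* (top_box u k) (top_box u k') \<and> R\<^sup>*\<^sup>* (top_box u k') (top_box u k)"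
    if "a \<le> k" "k \<le> k'" "k' < b" for k k'
    using that(2,3)
  proof (induction k' rule: dec_induct)
    case base
    then show ?case by simp
  next
    case (step n)
    then show ?case
      using that(1) adj[of n]
      by (meson Suc_lessD converse_rtranclp_into_rtranclp le_trans rtranclp.rtrancl_into_rtrancl)
  qed
  then have "R\<^sup>*\<^sup>* x y" if "x \<in> S" "y \<in> S" for x y
    using that unfolding S by (auto, metis nat_le_linear)
  then show ?thesis
    unfolding box_connected_def R_def S_def by blast
qed

lemma border_strip_if_raised_between:
  assumes l: "lattice_path m r l" and u: "lattice_path m r u"
    and s: "raised_between a b l u" and "a < b"
  shows "border_strip (boxes m l u)"
proof -
  have "boxes m l u \<noteq> {}"
    using boxes_eq_top_boxes_if_raised_between[OF l u s] \<open>a < b\<close> by simp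
  moreover have "\<not> has_2x2 (boxes m l u)"
    using raised_between_ht[OF s] by (auto simp: has_2x2_boxes_iff[OF l u])
  ultimately show ?thesis
    unfolding border_strip_def
    using skew_shape_boxes box_connected_if_raised_between[OF assms] by blast
qed

lemma max_intersection_intervals_raised_between:
  assumes l: "lattice_path m r l" and u: "lattice_path m r u"
    and s: "raised_between a b l u" and "a < b"
  shows "max_intersection_intervals l u = {(0, a - 1), (b, m + r)}"
proof -
  note bounds = raised_between_bounds[OF l u s \<open>a < b\<close>]
  have len: "length l = m + r" "length u = m + r"
    using l u by (simp_all add: lattice_path_length)
  have meet: "pt l k = pt u k \<longleftrightarrow> \<not> (a \<le> k \<and> k < b)" if "k \<le> m + r" for k
    using that pt_eq_iff_ht_eq[of k l u] len raised_between_ht[OF s, of k] by auto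
  show ?thesis
  proof (intro equalityI subsetI)
    fix I assume "I \<in> max_intersection_intervals l u"
    then obtain x y where I: "I = (x, y)" "x \<le> y" "y \<le> m + r"
      and eq: "\<And>k. x \<le> k \<and> k \<le> y \<Longrightarrow> pt l k = pt u k"
      and left: "x = 0 \<or> pt l (x - 1) \<noteq> pt u (x - 1)"
      and right: "y = m + r \<or> pt l (Suc y) \<noteq> pt u (Suc y)"
      unfolding max_intersection_intervals_def len by auto
    have inside: "\<not> (a \<le> k \<and> k < b)" if "x \<le> k" "k \<le> y" for k
      using eq[of k] meet[of k] that I by auto
    have after: "a \<le> Suc y \<and> Suc y < b" if "y \<noteq> m + r"
      using right that meet[of "Suc y"] I by auto
    have before: "a \<le> x - 1 \<and> x - 1 < b" if "x \<noteq> 0"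
      using left that meet[of "x - 1"] I by auto
    have "x = 0 \<and> y = a - 1 \<or> x = b \<and> y = m + r"
    proof (cases "x = 0")
      case True
      then have "y \<noteq> m + r"
        using inside[of a] bounds \<open>a < b\<close> by auto
      then show ?thesis
        using True after inside[of y] I by auto
    next
      case False
      then have "x = b"
        using before inside[of x] I by auto
      then show ?thesis
        using after inside[of y] I by (cases "y = m + r") auto
    qed
    then show "I \<in> {(0, a - 1), (b, m + r)}"
      using I by auto
  next
    fix I assume "I \<in> {(0, a - 1), (b, m + r)}"
    then show "I \<in> max_intersection_intervals l u"
      using bounds \<open>a < b\<close> meet unfolding max_intersection_intervals_def len
      by (auto simp: Suc_le_eq)
  qed
qed

lemma lattice_path_eqI:
  assumes "lattice_path m r p" "lattice_path m r q" "\<And>k. ht p k = ht q k"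
  shows "p = q"
proof (rule nth_equalityI)
  show "length p = length q"
    using assms by (simp add: lattice_path_length)
  fix i assume "i < length p"
  then show "p ! i = q ! i"
    using assms ht_Suc[of i p] ht_Suc[of i q] \<open>length p = length q\<close> by (auto split: if_splits)
qed

lemma common_points_agree:
  assumes I: "(x, y) \<in> max_intersection_intervals l' u'" and len: "length l' = length l"
    and pts: "{pt l k | k. c \<le> k \<and> k \<le> e} = {pt l' k | k. x \<le> k \<and> k \<le> y}"
    and k: "c \<le> k" "k \<le> e" "e \<le> length l"
  shows "pt l' k = pt l k \<and> pt u' k = pt l k"
proof -
  obtain k' where k': "x \<le> k'" "k' \<le> y" "pt l k = pt l' k'"
    using pts k by blast
  have "y \<le> length l'" and meet: "\<And>k. x \<le> k \<and> k \<le> y \<Longrightarrow> pt l' k = pt u' k"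
    using I unfolding max_intersection_intervals_def by auto
  have "k = k'"
    using k' k \<open>y \<le> length l'\<close> len wd_plus_ht[of k l] wd_plus_ht[of k' l'] by (simp add: pt_conv)
  then show ?thesis
    using k' meet by auto
qed

lemma ht_agree_on_max_intersection:
  assumes l: "lattice_path m r l" and l': "lattice_path m r l'"
    and "(c, e) \<in> max_intersection_intervals l u"
    and "max_intersections l u = max_intersections l' u'"
    and "c \<le> k" "k \<le> e"
  shows "ht l' k = ht l k" "ht u' k = ht l k"
proof -
  have "(\<lambda>(x, y). {pt l k | k. x \<le> k \<and> k \<le> y}) (c, e) \<in> max_intersections l u"
    unfolding max_intersections_def using assms(3) by (rule imageI)
  then have "{pt l k | k. c \<le> k \<and> k \<le> e} \<in> max_intersections l' u'"
    using assms(4) by simp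
  then obtain x y where xy: "(x, y) \<in> max_intersection_intervals l' u'"
    and pts: "{pt l k | k. c \<le> k \<and> k \<le> e} = {pt l' k | k. x \<le> k \<and> k \<le> y}"
    unfolding max_intersections_def by auto
  moreover have "e \<le> length l"
    using assms(3) by (simp add: max_intersection_intervals_def)
  moreover have "length l' = length l"
    using l l' by (simp add: lattice_path_length)
  ultimately have "pt l' k = pt l k \<and> pt u' k = pt l k"
    using common_points_agree[OF xy _ pts] assms(5,6) by blast
  then show "ht l' k = ht l k" "ht u' k = ht l k"
    by (simp_all add: pt_conv)
qed

lemma raised_between_same_intersections_agree:
  assumes l: "lattice_path m r l" and u: "lattice_path m r u"
    and s: "raised_between a b l u" and "a < b"
    and l': "lattice_path m r l'" and u': "lattice_path m r u'"
    and mi: "max_intersections l u = max_intersections l' u'"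
    and out: "k < a \<or> b \<le> k"
  shows "ht l' k = ht l k \<and> ht u' k = ht u k"
proof (cases "k \<le> m + r")
  case True
  have "ht u k = ht l k"
    using raised_between_ht[OF s, of k] out by auto
  moreover have "(0, a - 1) \<in> max_intersection_intervals l u \<and> 0 \<le> k \<and> k \<le> a - 1
      \<or> (b, m + r) \<in> max_intersection_intervals l u \<and> b \<le> k \<and> k \<le> m + r"
    using out True max_intersection_intervals_raised_between[OF l u s \<open>a < b\<close>] by auto
  then obtain c e where "(c, e) \<in> max_intersection_intervals l u" "c \<le> k" "k \<le> e"
    by blast
  ultimately show ?thesis
    using ht_agree_on_max_intersection[OF l l' _ mi] by metis
next
  case False
  then show ?thesis
    using lattice_path_ht_eq_beyond[OF l l'] lattice_path_ht_eq_beyond[OF u u'] by simp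
qed

lemma upper_ht_eq_after_common_point:
  assumes "ht u c = ht l c" "ht u' c = ht l' c" "ht l' c = ht l c"
    and "ht l (Suc c) < ht u (Suc c)" "ht l' (Suc c) < ht u' (Suc c)"
  shows "ht u' (Suc c) = ht u (Suc c)"
  using assms ht_mono[of c "Suc c" l] ht_mono[of c "Suc c" l'] ht_Suc_le[of u c] ht_Suc_le[of u' c]
  by linarith

text \<open>Outside \<open>[a, b)\<close> the two paths are pinned down by the maximal intersections, so the
  clone can only be shifted along the anti-diagonal by \<open>0\<close>.\<close>

lemma raised_between_unique_in_family:
  assumes l: "lattice_path m r l" and u: "lattice_path m r u"
    and s: "raised_between a b l u" and "a < b"
    and l': "lattice_path m r l'" and u': "lattice_path m r u'"
    and thin: "\<not> has_2x2 (boxes m l' u')"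
    and mi: "max_intersections l u = max_intersections l' u'"
    and cl: "clones (boxes m l u) (boxes m l' u')"
  shows "l' = l \<and> u' = u"
proof -
  note outside = raised_between_same_intersections_agree[OF l u s \<open>a < b\<close> l' u' mi]
  note bounds = raised_between_bounds[OF l u s \<open>a < b\<close>]
  have thin': "ht u' k \<le> Suc (ht l' k)" for k
    using thin by (auto simp: has_2x2_boxes_iff[OF l' u'] not_le less_Suc_eq_le)
  obtain d :: int where nonneg: "\<forall>(i, j)\<in>boxes m l u. 0 \<le> int i + d \<and> 0 \<le> int j - d"
    and shifted: "boxes m l' u' = (\<lambda>(i, j). (nat (int i + d), nat (int j - d))) ` boxes m l u"
    using cl unfolding clones_def by blast
  define shift where "shift = (\<lambda>(i::nat, j::nat). (nat (int i + d), nat (int j - d)))"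
  have in_boxes: "top_box u k \<in> boxes m l u" if "a \<le> k" "k < b" for k
    using that top_box_in_boxes[OF l u] raised_between_ht[OF s, of k] by simp
  have moved: "shift (top_box u k) = top_box u' k \<and> ht l' k < ht u' k" if "a \<le> k" "k < b" for k
  proof -
    have "shift (top_box u k) \<in> boxes m l' u'"
      using shifted in_boxes[OF that] unfolding shift_def by blast
    moreover have "label (shift (top_box u k)) = k"
      using nonneg in_boxes[OF that] label_top_box[of u k] raised_between_ht[OF s, of k] that
      by (auto simp: shift_def label_def top_box_def)
    ultimately show ?thesis
      using box_eq_top_box[OF l' u'] ht_less_at_label[OF l' u'] thin' by metis
  qed
  obtain c where "a = Suc c"
    using bounds by (cases a) auto
  then have "ht u' a = ht u a"
    using upper_ht_eq_after_common_point[of u c l u' l'] outside[of c] moved[of a]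
      raised_between_ht[OF s, of c] raised_between_ht[OF s, of a] \<open>a < b\<close> by simp
  then have "d = 0"
    using moved[of a] nonneg in_boxes[of a] \<open>a < b\<close>
    by (auto simp: shift_def top_box_def)
  then have "ht l' k = ht l k \<and> ht u' k = ht u k" if "a \<le> k" "k < b" for k
    using moved[OF that] thin'[of k] raised_between_ht[OF s, of k] that
    by (auto simp: shift_def top_box_def)
  then have "ht l' k = ht l k \<and> ht u' k = ht u k" for k
    using outside by (meson not_le)
  then show ?thesis
    using lattice_path_eqI[OF l' l] lattice_path_eqI[OF u' u] by blast
qed

lemma clones_refl: "clones S S"
  unfolding clones_def by (intro exI[of _ 0]) (auto simp: image_iff)

lemma raised_between_if_single_block_bottom:
  assumes "block_tiled_bottom m r P Q (l, u, \<tau>)" "card \<tau> = 1"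
  shows "\<tau> = {boxes m l u} \<and> lattice_path m r l \<and> lattice_path m r u
    \<and> in_region P Q l \<and> in_region P Q u \<and> (\<exists>a b. a < b \<and> raised_between a b l u)"
proof -
  have region: "block_tiled_region m r P Q (l, u, \<tau>)"
    using assms(1) by (simp add: block_tiled_bottom_def block_tiled_band_def)
  then have paths: "lattice_path m r l" "lattice_path m r u" "in_region P Q l" "in_region P Q u"
      "never_above l u"
    and blocks: "\<forall>S\<in>\<tau>. block m P Q S" and tiles: "\<Union>\<tau> = boxes m l u"
    unfolding block_tiled_region_def by auto
  obtain S where "\<tau> = {S}"
    using \<open>card \<tau> = 1\<close> by (rule card_1_singletonE)
  with blocks tiles have "\<tau> = {boxes m l u}" "border_strip (boxes m l u)"
    by (simp_all add: block_def)
  then show ?thesis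
    using paths raised_between_if_border_strip[OF paths(1,2,5)] by blast
qed

lemma same_family_raised_between_eq:
  assumes l: "lattice_path m r l" and u: "lattice_path m r u"
    and s: "raised_between a b l u" and "a < b"
    and band: "block_tiled_band m r P Q (l', u', \<tau>')"
    and family: "same_family (l, u, {boxes m l u}) (l', u', \<tau>')"
  shows "l' = l \<and> u' = u"
proof -
  have l': "lattice_path m r l'" and u': "lattice_path m r u'" and "\<Union>\<tau>' = boxes m l' u'"
    and "\<not> has_2x2 (boxes m l' u')"
    using band by (auto simp: block_tiled_band_def block_tiled_region_def)
  moreover obtain g where "bij_betw g {boxes m l u} \<tau>'" "clones (boxes m l u) (g (boxes m l u))"
    and "max_intersections l u = max_intersections l' u'"
    using family unfolding same_family_def by auto
  ultimately show ?thesis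
    using raised_between_unique_in_family[OF l u s \<open>a < b\<close> l' u'] bij_betw_imp_surj_on
    by fastforce
qed

lemma single_block_bottom_if_raised_between:
  assumes P: "lattice_path m r P" and Q: "lattice_path m r Q"
    and l: "lattice_path m r l" and u: "lattice_path m r u"
    and "in_region P Q l" "in_region P Q u"
    and s: "raised_between a b l u" and "a < b"
  shows "block_tiled_bottom m r P Q (l, u, {boxes m l u})"
proof -
  have "ht P k \<le> ht l k" "ht u k \<le> ht Q k" for k
    using never_above_ht[OF P l] never_above_ht[OF u Q] assms(5,6) by (simp_all add: in_region_def)
  then have "block m P Q (boxes m l u)"
    unfolding block_def using border_strip_if_raised_between[OF l u s \<open>a < b\<close>]
      boxes_mono[OF P Q l u] by blast
  moreover have "I \<inter> (outside_corners P Q \<union> {(0, 0), (m, r)}) \<noteq> {}"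
    if "I \<in> max_intersections l u" for I
  proof -
    have "pt l 0 \<in> I \<or> pt l (m + r) \<in> I"
      using that raised_between_bounds[OF l u s \<open>a < b\<close>]
      unfolding max_intersections_def max_intersection_intervals_raised_between[OF l u s \<open>a < b\<close>]
      by auto
    then show ?thesis
      using lattice_path_pt_end[OF l] by (auto simp: pt_conv wd_def)
  qed
  ultimately have "block_tiled_band m r P Q (l, u, {boxes m l u})"
    using assms(3-6) never_above_if_raised_between[OF s] border_strip_if_raised_between[OF l u s \<open>a < b\<close>]
    by (simp add: block_tiled_band_def block_tiled_region_def border_strip_def clones_refl)
  moreover have "never_above l l' \<and> never_above u u'"
    if "block_tiled_band m r P Q (l', u', \<tau>')" "same_family (l, u, {boxes m l u}) (l', u', \<tau>')"
    for l' u' \<tau>'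
    using same_family_raised_between_eq[OF l u s \<open>a < b\<close> that] by (simp add: never_above_def)
  ultimately show ?thesis
    unfolding block_tiled_bottom_def by force
qed

section \<open>Edges of convex hulls\<close>

lemma extreme_point_of_closed_segment: "a extreme_point_of closed_segment a b"
proof (cases "a = b")
  case True
  then show ?thesis by simp
next
  case False
  then have "a \<notin> convex hull {b}"
    by simp
  then show ?thesis
    using extreme_point_of_convex_hull_insert[of "{b}" a] by (simp add: segment_convex_hull)
qed

lemma extreme_points_of_closed_segment: "{x. x extreme_point_of closed_segment a b} = {a, b}"
  using extreme_point_of_convex_hull[of _ "{a, b}"] extreme_point_of_closed_segment[of a b]
    extreme_point_of_closed_segment[of b a]
  by (auto simp: segment_convex_hull insert_commute)

lemma closed_segment_eq_iff: "closed_segment a b = closed_segment c d \<longleftrightarrow> {a, b} = {c, d}"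
  by (metis extreme_points_of_closed_segment segment_convex_hull)

lemma edges_of_convex_hull_endpoints:
  assumes "F \<in> edges_of (convex hull V)"
  obtains a b where "a \<in> V" "b \<in> V" "a \<noteq> b" "F = closed_segment a b"
proof -
  obtain a b where ab: "a \<noteq> b" "F = closed_segment a b" and face: "F face_of convex hull V"
    using assms unfolding edges_of_def by blast
  have "x \<in> V" if "x \<in> {a, b}" for x
    using that extreme_points_of_closed_segment[of a b] extreme_point_of_face[OF face]
      extreme_point_of_convex_hull ab(2) by blast
  then show thesis
    using that ab by blast
qed

lemma face_of_linear_level_set:
  fixes f :: "'a::real_vector \<Rightarrow> real"
  assumes f: "linear f" and "convex K" and le: "\<And>z. z \<in> K \<Longrightarrow> f z \<le> M"
  shows "{z \<in> K. f z = M} face_of K"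
  unfolding face_of_def
proof (intro conjI ballI impI)
  have "{z \<in> K. f z = M} = K \<inter> f -` {M}"
    by auto
  then show "convex {z \<in> K. f z = M}"
    using \<open>convex K\<close> convex_linear_vimage[OF f, of "{M}"] by (simp add: convex_Int)
next
  fix a b z assume a: "a \<in> K" and b: "b \<in> K" and z: "z \<in> {z \<in> K. f z = M}"
    and "z \<in> open_segment a b"
  then obtain u where u: "0 < u" "u < 1" "z = (1 - u) *\<^sub>R a + u *\<^sub>R b"
    unfolding in_segment by blast
  have "f z = (1 - u) * f a + u * f b"
    unfolding u(3) by (simp add: linear_add[OF f] linear_scale[OF f])
  then have "(1 - u) * (M - f a) + u * (M - f b) = 0"
    using z by (simp add: algebra_simps)
  moreover have "0 \<le> (1 - u) * (M - f a)" "0 \<le> u * (M - f b)"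
    using le[OF a] le[OF b] u by simp_all
  ultimately show "a \<in> {z \<in> K. f z = M}" "b \<in> {z \<in> K. f z = M}"
    using a b u by (simp_all add: add_nonneg_eq_0_iff)
qed auto

lemma convex_hull_linear_level_set:
  fixes f :: "'a::real_vector \<Rightarrow> real"
  assumes "finite V" and f: "linear f" and le: "\<And>v. v \<in> V \<Longrightarrow> f v \<le> M"
  shows "{z \<in> convex hull V. f z = M} = convex hull {v \<in> V. f v = M}"
proof (intro equalityI subsetI)
  fix z assume "z \<in> {z \<in> convex hull V. f z = M}"
  then obtain c where c: "\<forall>v\<in>V. 0 \<le> c v" "sum c V = 1" "(\<Sum>v\<in>V. c v *\<^sub>R v) = z"
    and "f z = M"
    using convex_hull_finite[OF \<open>finite V\<close>] by auto
  define W where "W = {v \<in> V. f v = M}"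
  have "f z = (\<Sum>v\<in>V. c v * f v)"
    unfolding c(3)[symmetric] by (simp add: linear_sum[OF f] linear_scale[OF f])
  then have "(\<Sum>v\<in>V. c v * (M - f v)) = M * sum c V - f z"
    by (simp add: algebra_simps sum_subtractf sum_distrib_left)
  then have sum0: "(\<Sum>v\<in>V. c v * (M - f v)) = 0"
    using c(2) \<open>f z = M\<close> by simp
  have nonneg: "0 \<le> c v * (M - f v)" if "v \<in> V" for v
    using c(1) le that by simp
  have zero: "c v = 0" if "v \<in> V - W" for v
  proof -
    have "c v * (M - f v) = 0"
      using sum_nonneg_eq_0_iff[OF \<open>finite V\<close> nonneg] sum0 that by simp
    then show ?thesis
      using that by (auto simp: W_def)
  qed
  have "W \<subseteq> V" "finite W"
    using \<open>finite V\<close> by (auto simp: W_def)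
  then have "sum c W = sum c V" "(\<Sum>v\<in>W. c v *\<^sub>R v) = (\<Sum>v\<in>V. c v *\<^sub>R v)"
    using zero by (auto intro: sum.mono_neutral_left[OF \<open>finite V\<close>])
  then have "sum c W = 1" "(\<Sum>v\<in>W. c v *\<^sub>R v) = z"
    using c by simp_all
  then show "z \<in> convex hull {v \<in> V. f v = M}"
    unfolding W_def[symmetric] convex_hull_finite[OF \<open>finite W\<close>] using c(1) \<open>W \<subseteq> V\<close> by blast
next
  fix z assume z: "z \<in> convex hull {v \<in> V. f v = M}"
  have "convex hull {v \<in> V. f v = M} \<subseteq> f -` {M}"
    by (rule hull_minimal) (auto intro: convex_linear_vimage[OF f])
  then show "z \<in> {z \<in> convex hull V. f z = M}"
    using z hull_mono[of "{v \<in> V. f v = M}" V] by auto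
qed

lemma closed_segment_in_edges_of:
  fixes f :: "'a::real_vector \<Rightarrow> real"
  assumes "finite V" "linear f" "a \<in> V" "b \<in> V" "a \<noteq> b" "f a = M" "f b = M"
    and less: "\<And>v. v \<in> V \<Longrightarrow> v \<noteq> a \<Longrightarrow> v \<noteq> b \<Longrightarrow> f v < M"
  shows "closed_segment a b \<in> edges_of (convex hull V)"
proof -
  have le: "f v \<le> M" if "v \<in> V" for v
    using less[OF that] assms(6,7) by fastforce
  have "{v \<in> V. f v = M} = {a, b}"
    using assms less by fastforce
  then have "closed_segment a b = {z \<in> convex hull V. f z = M}"
    using convex_hull_linear_level_set[OF assms(1,2) le] by (simp add: segment_convex_hull)
  moreover have "convex hull V \<subseteq> f -` {..M}"
    using le by (intro hull_minimal convex_linear_vimage[OF assms(2)]) auto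
  then have "{z \<in> convex hull V. f z = M} face_of convex hull V"
    using face_of_linear_level_set[OF assms(2)] by blast
  ultimately show ?thesis
    unfolding edges_of_def using \<open>a \<noteq> b\<close> by auto
qed

section \<open>Indicator vectors\<close>

lemma ind_vec_eq_iff: "ind_vec A = ind_vec B \<longleftrightarrow> A = B"
  unfolding ind_vec_def by (metis one_neq_zero set_eqI)

lemma segment_apply: "((1 - u) *\<^sub>R a + u *\<^sub>R b) i = (1 - u) * a i + u * b i"
  for a b :: "'a \<Rightarrow> real"
  by (simp add: scaleR_fun_def plus_fun_def)

lemma ind_vec_in_closed_segment:
  assumes "ind_vec C \<in> closed_segment (ind_vec B) (ind_vec B')"
  shows "C = B \<or> C = B'"
proof -
  have "C = B \<or> C = B'" if z: "z \<in> B" "z \<notin> B'" and C: "ind_vec C \<in> closed_segment (ind_vec B) (ind_vec B')"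
    for z B B'
  proof -
    obtain u where u: "0 \<le> u" "u \<le> 1" "ind_vec C = (1 - u) *\<^sub>R ind_vec B + u *\<^sub>R ind_vec B'"
      using C unfolding in_segment by blast
    then have "ind_vec C z = 1 - u"
      using segment_apply[of u "ind_vec B" "ind_vec B'" z] z by (simp add: ind_vec_def)
    then have "u = 0 \<or> u = 1"
      by (auto simp: ind_vec_def split: if_splits)
    then show ?thesis
      using u(3) ind_vec_eq_iff by auto
  qed
  moreover have "C = B" if "B = B'"
    using assms that by (simp add: ind_vec_eq_iff)
  ultimately show ?thesis
    using assms closed_segment_commute by blast
qed

lemma linear_sum_coordinates: "linear (\<lambda>z :: 'a \<Rightarrow> real. \<Sum>i\<in>S. z i)"
  by (rule linearI) (simp_all add: plus_fun_def scaleR_fun_def sum.distrib sum_distrib_left)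

lemma sum_coordinates_ind_vec: "finite S \<Longrightarrow> (\<Sum>i\<in>S. ind_vec C i) = real (card (S \<inter> C))"
  by (simp add: ind_vec_def sum.If_cases Int_def)

lemma card_Int_less:
  assumes "finite B" "finite C" "card B = r" "card C = r" "C \<noteq> B"
  shows "card (B \<inter> C) < r"
  using assms by (metis Int_lower1 Int_lower2 card_subset_eq finite_Int le_neq_implies_less card_mono)

text \<open>For a family of equicardinal sets, \<open>B\<close> and \<open>B'\<close> differing by a single exchange are the only
  sets maximising \<open>z \<mapsto> \<Sum>i\<in>B. z i + \<Sum>i\<in>B'. z i\<close>, so they span an edge.\<close>

lemma exchange_segment_in_edges_of:
  assumes "finite Bs" and Bs: "\<And>C. C \<in> Bs \<Longrightarrow> finite C \<and> card C = r"
    and B: "B \<in> Bs" and B': "B' \<in> Bs" and "B - B' = {x}" "B' - B = {y}"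
  shows "closed_segment (ind_vec B) (ind_vec B') \<in> edges_of (convex hull (ind_vec ` Bs))"
proof -
  define f where "f z = (\<Sum>i\<in>B. z i) + (\<Sum>i\<in>B'. z i)" for z :: "nat \<Rightarrow> real"
  have fin: "finite B" "finite B'" "card B = r" "card B' = r"
    using Bs B B' by auto
  have f_ind: "f (ind_vec C) = real (card (B \<inter> C) + card (B' \<inter> C))" for C
    using fin by (simp add: f_def sum_coordinates_ind_vec)
  have "B = insert x (B \<inter> B')" "x \<notin> B \<inter> B'"
    using \<open>B - B' = {x}\<close> by auto
  then have common: "Suc (card (B \<inter> B')) = r"
    using fin by (metis card_insert_disjoint finite_Int)
  have "linear f"
    unfolding f_def by (intro linear_compose_add linear_sum_coordinates)
  moreover have "f (ind_vec B) = real (2 * r - 1)" "f (ind_vec B') = real (2 * r - 1)"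
    using f_ind common fin by (simp_all add: Int_commute)
  moreover have "f v < real (2 * r - 1)"
    if v: "v \<in> ind_vec ` Bs" "v \<noteq> ind_vec B" "v \<noteq> ind_vec B'" for v
  proof -
    obtain C where "C \<in> Bs" "v = ind_vec C" "C \<noteq> B" "C \<noteq> B'"
      using v by auto
    then show ?thesis
      using card_Int_less[of B C r] card_Int_less[of B' C r] Bs fin f_ind by fastforce
  qed
  moreover have "ind_vec B \<noteq> ind_vec B'"
    using \<open>B - B' = {x}\<close> ind_vec_eq_iff by fastforce
  ultimately show ?thesis
    using closed_segment_in_edges_of[of "ind_vec ` Bs" f] \<open>finite Bs\<close> B B' by blast
qed

section \<open>Bases of the lattice path matroid\<close>

definition prefix_card :: "nat set \<Rightarrow> nat \<Rightarrow> nat" where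
  "prefix_card S k = card (S \<inter> {..k})"

lemma prefix_card_0: "0 \<notin> S \<Longrightarrow> prefix_card S 0 = 0"
  by (simp add: prefix_card_def atMost_0)

lemma prefix_card_Suc: "prefix_card S (Suc k) = prefix_card S k + (if Suc k \<in> S then 1 else 0)"
proof -
  have "S \<inter> {..Suc k} = (if Suc k \<in> S then insert (Suc k) (S \<inter> {..k}) else S \<inter> {..k})"
    by (auto simp: le_Suc_eq)
  then show ?thesis
    by (simp add: prefix_card_def)
qed

lemma ht_path_of:
  assumes "B \<subseteq> {1..m + r}" "k \<le> m + r"
  shows "ht (path_of m r B) k = prefix_card B k"
  using assms(2)
proof (induction k)
  case 0
  have "0 \<notin> B"
    using assms(1) by auto
  then show ?case
    by (simp add: prefix_card_0)
next
  case (Suc k)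
  then show ?case
    by (simp add: ht_Suc prefix_card_Suc path_of_def)
qed

lemma lpm_bases_iff:
  assumes P: "lattice_path m r P" and Q: "lattice_path m r Q"
  shows "B \<in> lpm_bases m r P Q \<longleftrightarrow> B \<subseteq> {1..m + r} \<and> card B = r \<and>
    (\<forall>k \<le> m + r. ht P k \<le> prefix_card B k \<and> prefix_card B k \<le> ht Q k)"
  using ht_path_of[of B m r] P Q
  by (auto simp: lpm_bases_def in_region_def never_above_def lattice_path_length)

lemma lattice_path_path_of:
  assumes "B \<subseteq> {1..m + r}" "card B = r"
  shows "lattice_path m r (path_of m r B)"
proof -
  have "B \<inter> {..m + r} = B"
    using assms(1) by auto
  then show ?thesis
    using ht_path_of[OF assms(1) order_refl] assms(2)
    by (simp add: lattice_path_def prefix_card_def ht_conv_filter)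
qed

lemma Npos_in_lpm_bases:
  assumes "lattice_path m r p" "in_region P Q p"
  shows "Npos p \<in> lpm_bases m r P Q"
  using assms Npos_subset[of p] card_Npos[of p] path_of_Npos[of p m r]
  by (simp add: lpm_bases_def lattice_path_def)

lemma prefix_card_exchange:
  assumes "a \<in> B" "b \<notin> B" "0 \<notin> B" "0 < b"
  shows "prefix_card (insert b (B - {a})) k + (if a \<le> k then 1 else 0)
    = prefix_card B k + (if b \<le> k then 1 else 0)"
proof (induction k)
  case 0
  have "0 < a"
    using assms by (cases a) auto
  then show ?case
    using assms by (auto simp: prefix_card_0)
next
  case (Suc k)
  then show ?case
    using assms by (auto simp: prefix_card_Suc le_Suc_eq split: if_splits)
qed

lemma prefix_card_catch_up:
  assumes ahead: "prefix_card B a = Suc (prefix_card B' a)"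
    and equal: "prefix_card B n = prefix_card B' n" and "a \<le> n"
  obtains b where "a < b" "b \<le> n" "b \<in> B' - B"
    "\<And>k. a \<le> k \<Longrightarrow> k < b \<Longrightarrow> prefix_card B' k < prefix_card B k"
proof -
  define b where "b = (LEAST k. a < k \<and> prefix_card B k \<le> prefix_card B' k)"
  have "a \<noteq> n"
    using ahead equal by auto
  then have ex: "a < n \<and> prefix_card B n \<le> prefix_card B' n"
    using \<open>a \<le> n\<close> equal by simp
  have b: "a < b" "prefix_card B b \<le> prefix_card B' b"
    using LeastI[of "\<lambda>k. a < k \<and> prefix_card B k \<le> prefix_card B' k", OF ex] by (auto simp: b_def)
  have "b \<le> n"
    unfolding b_def using ex by (rule Least_le)
  have behind: "prefix_card B' k < prefix_card B k" if "a \<le> k" "k < b" for k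
  proof (cases "k = a")
    case True
    then show ?thesis using ahead by simp
  next
    case False
    then show ?thesis
      using not_less_Least[of k "\<lambda>k. a < k \<and> prefix_card B k \<le> prefix_card B' k"] that
      by (auto simp: b_def)
  qed
  have "Suc (b - 1) = b" "a \<le> b - 1" "b - 1 < b"
    using b by auto
  then have "b \<in> B' - B"
    using behind[of "b - 1"] b prefix_card_Suc[of B "b - 1"] prefix_card_Suc[of B' "b - 1"]
    by (auto split: if_splits)
  then show thesis
    using that b \<open>b \<le> n\<close> behind by blast
qed

lemma card_exchange:
  assumes "finite B" "a \<in> B" "b \<notin> B"
  shows "card (insert b (B - {a})) = card B"
proof -
  have "card (insert b (B - {a})) = Suc (card B - 1)"
    using assms by simp
  also have "\<dots> = card B"
    using assms card_gt_0_iff[of B] by (metis Suc_pred' empty_iff)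
  finally show ?thesis .
qed

text \<open>Moving a North step of a base from position \<open>a\<close> to a later position \<open>b\<close> lowers the path
  by one on \<open>[a, b)\<close>; moving one from \<open>b\<close> to \<open>a\<close> raises it there.\<close>

lemma lpm_bases_move_later:
  assumes P: "lattice_path m r P" and Q: "lattice_path m r Q" and B: "B \<in> lpm_bases m r P Q"
    and "a \<in> B" "b \<notin> B" "a < b" "b \<le> m + r"
    and room: "\<And>k. a \<le> k \<Longrightarrow> k < b \<Longrightarrow> ht P k < prefix_card B k"
  shows "insert b (B - {a}) \<in> lpm_bases m r P Q"
proof -
  have Bs: "B \<subseteq> {1..m + r}" "card B = r"
    and region: "\<And>k. k \<le> m + r \<Longrightarrow> ht P k \<le> prefix_card B k \<and> prefix_card B k \<le> ht Q k"
    using B lpm_bases_iff[OF P Q] by auto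
  have "0 \<notin> B" "0 < b"
    using Bs \<open>a < b\<close> by auto
  then have exch: "prefix_card (insert b (B - {a})) k + (if a \<le> k then 1 else 0)
      = prefix_card B k + (if b \<le> k then 1 else 0)" for k
    using prefix_card_exchange[of a B b k] assms(4,5) by blast
  have "ht P k \<le> prefix_card (insert b (B - {a})) k \<and> prefix_card (insert b (B - {a})) k \<le> ht Q k"
    if "k \<le> m + r" for k
    using region[OF that] room[of k] exch[of k] \<open>a < b\<close> by (cases "a \<le> k \<and> k < b") (auto split: if_splits)
  moreover have "insert b (B - {a}) \<subseteq> {1..m + r}" "card (insert b (B - {a})) = r"
    using Bs assms(4-7) card_exchange[of B a b] finite_subset[OF Bs(1)] by auto
  ultimately show ?thesis
    using lpm_bases_iff[OF P Q] by blast
qed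

lemma lpm_bases_move_earlier:
  assumes P: "lattice_path m r P" and Q: "lattice_path m r Q" and B: "B \<in> lpm_bases m r P Q"
    and "b \<in> B" "a \<notin> B" "1 \<le> a" "a < b"
    and room: "\<And>k. a \<le> k \<Longrightarrow> k < b \<Longrightarrow> prefix_card B k < ht Q k"
  shows "insert a (B - {b}) \<in> lpm_bases m r P Q"
proof -
  have Bs: "B \<subseteq> {1..m + r}" "card B = r"
    and region: "\<And>k. k \<le> m + r \<Longrightarrow> ht P k \<le> prefix_card B k \<and> prefix_card B k \<le> ht Q k"
    using B lpm_bases_iff[OF P Q] by auto
  have "0 \<notin> B" "0 < a"
    using Bs \<open>1 \<le> a\<close> by auto
  then have exch: "prefix_card (insert a (B - {b})) k + (if b \<le> k then 1 else 0)
      = prefix_card B k + (if a \<le> k then 1 else 0)" for k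
    using prefix_card_exchange[of b B a k] assms(4,5) by blast
  have "ht P k \<le> prefix_card (insert a (B - {b})) k \<and> prefix_card (insert a (B - {b})) k \<le> ht Q k"
    if "k \<le> m + r" for k
    using region[OF that] room[of k] exch[of k] \<open>a < b\<close> by (cases "a \<le> k \<and> k < b") (auto split: if_splits)
  moreover have "insert a (B - {b}) \<subseteq> {1..m + r}" "card (insert a (B - {b})) = r"
    using Bs assms(4-7) card_exchange[of B b a] finite_subset[OF Bs(1)] by auto
  ultimately show ?thesis
    using lpm_bases_iff[OF P Q] by blast
qed

lemma lpm_bases_exchange:
  assumes P: "lattice_path m r P" and Q: "lattice_path m r Q"
    and B: "B \<in> lpm_bases m r P Q" and B': "B' \<in> lpm_bases m r P Q"
    and a: "a \<in> B - B'" and agree: "\<And>z. z < a \<Longrightarrow> z \<in> B \<longleftrightarrow> z \<in> B'"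
  obtains b where "b \<in> B' - B" "insert b (B - {a}) \<in> lpm_bases m r P Q"
    "insert a (B' - {b}) \<in> lpm_bases m r P Q"
proof -
  have Bs: "B \<subseteq> {1..m + r}" "card B = r" "B' \<subseteq> {1..m + r}" "card B' = r"
    and region: "\<And>k. k \<le> m + r \<Longrightarrow> ht P k \<le> prefix_card B' k \<and> prefix_card B k \<le> ht Q k"
    using B B' lpm_bases_iff[OF P Q] by auto
  have "1 \<le> a" "a \<le> m + r"
    using a Bs by auto
  have "B \<inter> {..a - 1} = B' \<inter> {..a - 1}"
    using agree \<open>1 \<le> a\<close> by auto
  then have "prefix_card B a = Suc (prefix_card B' a)"
    using prefix_card_Suc[of _ "a - 1"] a \<open>1 \<le> a\<close> by (simp add: prefix_card_def)
  moreover have "prefix_card B (m + r) = prefix_card B' (m + r)"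
    using Bs by (simp add: prefix_card_def Int_absorb2 subset_iff)
  ultimately obtain b where b: "a < b" "b \<le> m + r" "b \<in> B' - B"
    and behind: "\<And>k. a \<le> k \<Longrightarrow> k < b \<Longrightarrow> prefix_card B' k < prefix_card B k"
    using prefix_card_catch_up \<open>a \<le> m + r\<close> by blast
  have room: "ht P k < prefix_card B k \<and> prefix_card B' k < ht Q k" if "a \<le> k" "k < b" for k
  proof -
    have "k \<le> m + r"
      using that b by simp
    then show ?thesis
      using behind[OF that] region[of k] by fastforce
  qed
  have "insert b (B - {a}) \<in> lpm_bases m r P Q"
    using lpm_bases_move_later[OF P Q B] a b room by blast
  moreover have "insert a (B' - {b}) \<in> lpm_bases m r P Q"
    using lpm_bases_move_earlier[OF P Q B'] a b \<open>1 \<le> a\<close> room by blast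
  ultimately show thesis
    using that b by blast
qed

lemma lpm_bases_symmetric_exchange:
  assumes P: "lattice_path m r P" and Q: "lattice_path m r Q"
    and B: "B \<in> lpm_bases m r P Q" and B': "B' \<in> lpm_bases m r P Q" and "B \<noteq> B'"
  obtains a b where "a \<in> B - B'" "b \<in> B' - B"
    "insert b (B - {a}) \<in> lpm_bases m r P Q" "insert a (B' - {b}) \<in> lpm_bases m r P Q"
proof -
  define D where "D = (B - B') \<union> (B' - B)"
  define a where "a = (LEAST z. z \<in> D)"
  have "D \<noteq> {}"
    using \<open>B \<noteq> B'\<close> by (auto simp: D_def)
  then have "a \<in> D"
    unfolding a_def by (metis LeastI ex_in_conv)
  have agree: "z \<in> B \<longleftrightarrow> z \<in> B'" if "z < a" for z
    using not_less_Least[of z "\<lambda>z. z \<in> D"] that by (auto simp: a_def D_def)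
  show thesis
  proof (cases "a \<in> B - B'")
    case True
    then show thesis
      using lpm_bases_exchange[OF P Q B B' True agree] that by blast
  next
    case False
    then have "a \<in> B' - B"
      using \<open>a \<in> D\<close> by (auto simp: D_def)
    then show thesis
      using lpm_bases_exchange[OF P Q B' B _ agree[symmetric]] that by blast
  qed
qed

text \<open>If the segment is an edge, its midpoint is also the midpoint of the exchanged pair,
  which must then lie on the edge.\<close>

lemma single_exchange_if_edge:
  assumes edge: "closed_segment (ind_vec B) (ind_vec B') \<in> edges_of (convex hull (ind_vec ` Bs))"
    and a: "a \<in> B - B'" and b: "b \<in> B' - B"
    and C: "insert b (B - {a}) \<in> Bs" and C': "insert a (B' - {b}) \<in> Bs"
  shows "B - B' = {a} \<and> B' - B = {b}"
proof -
  define C where "C = insert b (B - {a})"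
  define C' where "C' = insert a (B' - {b})"
  have face: "closed_segment (ind_vec B) (ind_vec B') face_of convex hull (ind_vec ` Bs)"
    using edge by (simp add: edges_of_def)
  have "ind_vec C + ind_vec C' = ind_vec B + ind_vec B'"
    using a b by (auto simp: C_def C'_def ind_vec_def plus_fun_def)
  then have mid: "midpoint (ind_vec C) (ind_vec C') \<in> closed_segment (ind_vec B) (ind_vec B')"
    by (metis midpoint_def midpoint_in_closed_segment)
  have hull: "ind_vec C \<in> convex hull (ind_vec ` Bs)" "ind_vec C' \<in> convex hull (ind_vec ` Bs)"
    using C C' by (auto simp: C_def C'_def intro: hull_inc)
  have "ind_vec C \<in> closed_segment (ind_vec B) (ind_vec B')"
  proof (cases "ind_vec C = ind_vec C'")
    case True
    then show ?thesis using mid by simp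
  next
    case False
    then have "midpoint (ind_vec C) (ind_vec C') \<in> open_segment (ind_vec C) (ind_vec C')"
      by simp
    from face_ofD[OF face this hull mid] show ?thesis
      by blast
  qed
  then have "C = B'"
    using ind_vec_in_closed_segment b by (auto simp: C_def)
  then show ?thesis
    using a b by (auto simp: C_def)
qed

lemma edges_of_lpm_polytope_iff:
  assumes P: "lattice_path m r P" and Q: "lattice_path m r Q"
  shows "F \<in> edges_of (lpm_polytope m r P Q) \<longleftrightarrow>
    (\<exists>B B' a b. B \<in> lpm_bases m r P Q \<and> B' \<in> lpm_bases m r P Q \<and> B - B' = {a} \<and> B' - B = {b}
      \<and> F = closed_segment (ind_vec B) (ind_vec B'))"
proof
  assume F: "F \<in> edges_of (lpm_polytope m r P Q)"
  then obtain v w where "v \<in> ind_vec ` lpm_bases m r P Q" "w \<in> ind_vec ` lpm_bases m r P Q"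
    "v \<noteq> w" "F = closed_segment v w"
    unfolding lpm_polytope_def by (rule edges_of_convex_hull_endpoints)
  then obtain B B' where B: "B \<in> lpm_bases m r P Q" and B': "B' \<in> lpm_bases m r P Q"
    and "B \<noteq> B'" and F_eq: "F = closed_segment (ind_vec B) (ind_vec B')"
    by blast
  then obtain a b where "a \<in> B - B'" "b \<in> B' - B"
    "insert b (B - {a}) \<in> lpm_bases m r P Q" "insert a (B' - {b}) \<in> lpm_bases m r P Q"
    using lpm_bases_symmetric_exchange[OF P Q B B'] by blast
  then have "B - B' = {a} \<and> B' - B = {b}"
    using single_exchange_if_edge F unfolding F_eq lpm_polytope_def by blast
  then show "\<exists>B B' a b. B \<in> lpm_bases m r P Q \<and> B' \<in> lpm_bases m r P Q \<and> B - B' = {a}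
      \<and> B' - B = {b} \<and> F = closed_segment (ind_vec B) (ind_vec B')"
    using B B' F_eq by blast
next
  assume "\<exists>B B' a b. B \<in> lpm_bases m r P Q \<and> B' \<in> lpm_bases m r P Q \<and> B - B' = {a}
      \<and> B' - B = {b} \<and> F = closed_segment (ind_vec B) (ind_vec B')"
  then obtain B B' a b where "B \<in> lpm_bases m r P Q" "B' \<in> lpm_bases m r P Q" "B - B' = {a}"
    "B' - B = {b}" "F = closed_segment (ind_vec B) (ind_vec B')"
    by blast
  moreover have "finite (lpm_bases m r P Q)"
    by (rule finite_subset[of _ "Pow {1..m + r}"]) (auto simp: lpm_bases_def)
  moreover have "finite C \<and> card C = r" if "C \<in> lpm_bases m r P Q" for C
    using that by (auto simp: lpm_bases_def intro: finite_subset)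
  ultimately show "F \<in> edges_of (lpm_polytope m r P Q)"
    unfolding lpm_polytope_def using exchange_segment_in_edges_of by blast
qed

section \<open>The bijection\<close>

text \<open>Pairs of bases \<open>(L, U)\<close> differing by one exchange, oriented so that the path of \<open>U\<close>
  lies above that of \<open>L\<close>.\<close>

definition lpm_exchange_pairs :: "nat \<Rightarrow> nat \<Rightarrow> bool list \<Rightarrow> bool list \<Rightarrow> (nat set \<times> nat set) set" where
  "lpm_exchange_pairs m r P Q = {(L, U). L \<in> lpm_bases m r P Q \<and> U \<in> lpm_bases m r P Q \<and>
     (\<exists>a b. a < b \<and> U - L = {a} \<and> L - U = {b})}"

lemma inj_on_lpm_exchange_pairs_segment:
  "inj_on (\<lambda>(L, U). closed_segment (ind_vec L) (ind_vec U)) (lpm_exchange_pairs m r P Q)"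
proof (rule inj_onI)
  fix X Y assume X: "X \<in> lpm_exchange_pairs m r P Q" and Y: "Y \<in> lpm_exchange_pairs m r P Q"
    and eq: "(\<lambda>(L, U). closed_segment (ind_vec L) (ind_vec U)) X
      = (\<lambda>(L, U). closed_segment (ind_vec L) (ind_vec U)) Y"
  obtain L U L' U' a b a' b' where XY: "X = (L, U)" "Y = (L', U')"
    and ab: "a < b" "U - L = {a}" "L - U = {b}" and ab': "a' < b'" "U' - L' = {a'}" "L' - U' = {b'}"
    using X Y unfolding lpm_exchange_pairs_def by auto
  have "{ind_vec L, ind_vec U} = {ind_vec L', ind_vec U'}"
    using eq XY by (simp add: closed_segment_eq_iff)
  then have "L = L' \<and> U = U' \<or> L = U' \<and> U = L'"
    by (auto simp: doubleton_eq_iff ind_vec_eq_iff)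
  moreover have "\<not> (L = U' \<and> U = L')"
  proof
    assume "L = U' \<and> U = L'"
    then have "a = b'" "b = a'"
      using ab ab' by auto
    then show False
      using ab ab' by simp
  qed
  ultimately show "X = Y"
    using XY by simp
qed

lemma lpm_exchange_pairs_segments_eq_edges:
  assumes P: "lattice_path m r P" and Q: "lattice_path m r Q"
  shows "(\<lambda>(L, U). closed_segment (ind_vec L) (ind_vec U)) ` lpm_exchange_pairs m r P Q
    = edges_of (lpm_polytope m r P Q)"
proof (intro equalityI subsetI)
  fix F assume "F \<in> (\<lambda>(L, U). closed_segment (ind_vec L) (ind_vec U)) ` lpm_exchange_pairs m r P Q"
  then obtain L U a b where "L \<in> lpm_bases m r P Q" "U \<in> lpm_bases m r P Q"
    "U - L = {a}" "L - U = {b}" "F = closed_segment (ind_vec U) (ind_vec L)"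
    unfolding lpm_exchange_pairs_def by (auto simp: closed_segment_commute)
  then show "F \<in> edges_of (lpm_polytope m r P Q)"
    unfolding edges_of_lpm_polytope_iff[OF P Q] by blast
next
  fix F assume "F \<in> edges_of (lpm_polytope m r P Q)"
  then obtain B B' a b where B: "B \<in> lpm_bases m r P Q" "B' \<in> lpm_bases m r P Q"
    and ab: "B - B' = {a}" "B' - B = {b}" and F: "F = closed_segment (ind_vec B) (ind_vec B')"
    unfolding edges_of_lpm_polytope_iff[OF P Q] by blast
  have "a \<noteq> b"
    using ab by blast
  then have "(B', B) \<in> lpm_exchange_pairs m r P Q \<or> (B, B') \<in> lpm_exchange_pairs m r P Q"
    using B ab unfolding lpm_exchange_pairs_def by (auto simp: neq_iff)
  moreover have "F = (\<lambda>(L, U). closed_segment (ind_vec L) (ind_vec U)) (B', B)"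
    "F = (\<lambda>(L, U). closed_segment (ind_vec L) (ind_vec U)) (B, B')"
    using F by (simp_all add: closed_segment_commute)
  ultimately show "F \<in> (\<lambda>(L, U). closed_segment (ind_vec L) (ind_vec U)) ` lpm_exchange_pairs m r P Q"
    by (metis image_eqI)
qed

lemma single_block_bottom_iff:
  assumes P: "lattice_path m r P" and Q: "lattice_path m r Q"
  shows "block_tiled_bottom m r P Q (l, u, \<tau>) \<and> card \<tau> = 1 \<longleftrightarrow>
    \<tau> = {boxes m l u} \<and> lattice_path m r l \<and> lattice_path m r u \<and> in_region P Q l \<and> in_region P Q u
    \<and> (\<exists>a b. a < b \<and> raised_between a b l u)"
  using raised_between_if_single_block_bottom[of m r P Q l u \<tau>]
    single_block_bottom_if_raised_between[OF P Q, of l u] by auto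

lemma inj_on_single_block_bottoms_Npos_pair:
  assumes P: "lattice_path m r P" and Q: "lattice_path m r Q"
  shows "inj_on (\<lambda>(l, u, \<tau>). (Npos l, Npos u))
    {R. block_tiled_bottom m r P Q R \<and> card (snd (snd R)) = 1}"
proof (rule inj_onI)
  fix R R' assume "R \<in> {R. block_tiled_bottom m r P Q R \<and> card (snd (snd R)) = 1}"
    "R' \<in> {R. block_tiled_bottom m r P Q R \<and> card (snd (snd R)) = 1}"
    and eq: "(\<lambda>(l, u, \<tau>). (Npos l, Npos u)) R = (\<lambda>(l, u, \<tau>). (Npos l, Npos u)) R'"
  then obtain l u l' u' where R: "R = (l, u, {boxes m l u})" "R' = (l', u', {boxes m l' u'})"
    and paths: "lattice_path m r l" "lattice_path m r u" "lattice_path m r l'" "lattice_path m r u'"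
    using single_block_bottom_iff[OF P Q] by (metis (mono_tags, lifting) mem_Collect_eq prod_cases3 snd_conv)
  then have "Npos l = Npos l'" "Npos u = Npos u'"
    using eq by simp_all
  then show "R = R'"
    using R Npos_inj_lattice_path[OF paths(1,3)] Npos_inj_lattice_path[OF paths(2,4)] by simp
qed

lemma single_block_bottoms_Npos_pairs_eq_lpm_exchange_pairs:
  assumes P: "lattice_path m r P" and Q: "lattice_path m r Q"
  shows "(\<lambda>(l, u, \<tau>). (Npos l, Npos u)) ` {R. block_tiled_bottom m r P Q R \<and> card (snd (snd R)) = 1}
    = lpm_exchange_pairs m r P Q"
proof (intro equalityI subsetI)
  fix X assume "X \<in> (\<lambda>(l, u, \<tau>). (Npos l, Npos u)) `
    {R. block_tiled_bottom m r P Q R \<and> card (snd (snd R)) = 1}"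
  then obtain l u \<tau> where X: "X = (Npos l, Npos u)"
    and "block_tiled_bottom m r P Q (l, u, \<tau>) \<and> card \<tau> = 1"
    by auto
  then obtain a b where paths: "lattice_path m r l" "lattice_path m r u" "in_region P Q l"
    "in_region P Q u" and "a < b" "raised_between a b l u"
    unfolding single_block_bottom_iff[OF P Q] by blast
  then have "Npos u - Npos l = {a}" "Npos l - Npos u = {b}"
    using raised_between_iff_Npos_diff[OF paths(1,2)] by blast+
  then show "X \<in> lpm_exchange_pairs m r P Q"
    unfolding lpm_exchange_pairs_def X
    using Npos_in_lpm_bases[OF paths(1,3)] Npos_in_lpm_bases[OF paths(2,4)] \<open>a < b\<close> by blast
next
  fix X assume "X \<in> lpm_exchange_pairs m r P Q"
  then obtain L U a b where X: "X = (L, U)" and bases: "L \<in> lpm_bases m r P Q" "U \<in> lpm_bases m r P Q"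
    and "a < b" "U - L = {a}" "L - U = {b}"
    unfolding lpm_exchange_pairs_def by auto
  define l where "l = path_of m r L"
  define u where "u = path_of m r U"
  have paths: "lattice_path m r l" "lattice_path m r u" "in_region P Q l" "in_region P Q u"
    and "Npos l = L" "Npos u = U"
    using bases lattice_path_path_of Npos_path_of by (auto simp: lpm_bases_def l_def u_def)
  then have "raised_between a b l u"
    using raised_between_iff_Npos_diff[OF paths(1,2) \<open>a < b\<close>] \<open>U - L = {a}\<close> \<open>L - U = {b}\<close> by simp
  then have "(l, u, {boxes m l u}) \<in> {R. block_tiled_bottom m r P Q R \<and> card (snd (snd R)) = 1}"
    using single_block_bottom_iff[OF P Q, of l u "{boxes m l u}"] paths \<open>a < b\<close> by auto
  then show "X \<in> (\<lambda>(l, u, \<tau>). (Npos l, Npos u)) `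
    {R. block_tiled_bottom m r P Q R \<and> card (snd (snd R)) = 1}"
    using X \<open>Npos l = L\<close> \<open>Npos u = U\<close> by force
qed

theorem proposition5p8:
  fixes m r :: nat and P Q :: "bool list"
  assumes "lattice_path m r P" and "lattice_path m r Q"
    and "never_above P Q"
    and "connected_region m r P Q"
  shows "bij_betw
           (\<lambda>(l, u, \<tau>). closed_segment (ind_vec (Npos l)) (ind_vec (Npos u)))
           {R. block_tiled_bottom m r P Q R \<and> card (snd (snd R)) = 1}
           (edges_of (lpm_polytope m r P Q))"
proof -
  have "bij_betw (\<lambda>(l, u, \<tau>). (Npos l, Npos u))
      {R. block_tiled_bottom m r P Q R \<and> card (snd (snd R)) = 1} (lpm_exchange_pairs m r P Q)"
    using inj_on_single_block_bottoms_Npos_pair single_block_bottoms_Npos_pairs_eq_lpm_exchange_pairs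
      assms(1,2) by (simp add: bij_betw_def)
  moreover have "bij_betw (\<lambda>(L, U). closed_segment (ind_vec L) (ind_vec U))
      (lpm_exchange_pairs m r P Q) (edges_of (lpm_polytope m r P Q))"
    using inj_on_lpm_exchange_pairs_segment lpm_exchange_pairs_segments_eq_edges
      assms(1,2) by (simp add: bij_betw_def)
  ultimately have "bij_betw ((\<lambda>(L, U). closed_segment (ind_vec L) (ind_vec U)) \<circ> (\<lambda>(l, u, \<tau>). (Npos l, Npos u)))
      {R. block_tiled_bottom m r P Q R \<and> card (snd (snd R)) = 1} (edges_of (lpm_polytope m r P Q))"
    by (rule bij_betw_trans)
  moreover have "(\<lambda>(L, U). closed_segment (ind_vec L) (ind_vec U)) \<circ> (\<lambda>(l, u, \<tau>). (Npos l, Npos u))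
      = (\<lambda>(l, u, \<tau>). closed_segment (ind_vec (Npos l)) (ind_vec (Npos u)))"
    by (auto simp: fun_eq_iff)
  ultimately show ?thesis
    by metis
qed

end
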